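(* Suppose $n=2^s$ or $n=3\cdot 2^s$, $n\ge 8$, and let $R_n={\mathbf Z}[\zeta_n,1/2]$ with $\zeta_n=e^{2\pi i/n}$. Then $\mathrm{PU}_2(R_n)/\mathrm{PSU}_2(R_n)\cong\mu_n/\mu_n^2\cong{\mathbf Z}/2{\mathbf Z}$, where $\mu_n$ is the group of $n$th roots of unity.
   Context: $\mathrm{U}_2(R_n)$ is the group of $2\times2$ matrices $A$ over $R_n$ with $A\overline A^T=I$, $\mathrm{SU}_2(R_n)$ those of determinant $1$; $\mathrm{PU}_2(R_n)$ is $\mathrm{U}_2(R_n)$ modulo scalar matrices and $\mathrm{PSU}_2(R_n)=\mathrm{SU}_2(R_n)/\{\pm1\}$, viewed as a subgroup of $\mathrm{PU}_2(R_n)$. *)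

theory Defs
  imports "HOL-Analysis.Analysis" "HOL-Algebra.Elementary_Groups"
    "HOL-Computational_Algebra.Polynomial"
begin

definition zeta :: "nat \<Rightarrow> complex" where
  "zeta n = cis (2 * pi / real n)"

definition Rn :: "nat \<Rightarrow> complex set" where
  "Rn n = {x. \<exists>(p :: int poly) (k :: nat).
              x = poly (map_poly of_int p) (zeta n) / 2 ^ k}"

definition ctrans :: "complex^2^2 \<Rightarrow> complex^2^2" where
  "ctrans A = (\<chi> i j. cnj (A $ j $ i))"

definition U2_set :: "nat \<Rightarrow> (complex^2^2) set" where
  "U2_set n = {A. (\<forall>i j. A $ i $ j \<in> Rn n) \<and> A ** ctrans A = mat 1}"

definition SU2_set :: "nat \<Rightarrow> (complex^2^2) set" where
  "SU2_set n = {A \<in> U2_set n. det A = 1}"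

definition U2 :: "nat \<Rightarrow> (complex^2^2) monoid" where
  "U2 n = \<lparr>carrier = U2_set n, mult = (**), one = mat 1\<rparr>"

definition scalars :: "nat \<Rightarrow> (complex^2^2) set" where
  "scalars n = {A \<in> U2_set n. \<exists>c. A = mat c}"

definition PU2 :: "nat \<Rightarrow> (complex^2^2) set monoid" where
  "PU2 n = U2 n Mod scalars n"

text \<open>PSU_2(R_n) = SU_2(R_n)/{+-1}, viewed as the subgroup of PU_2(R_n)
  given by the images of SU_2(R_n)\<close>
definition PSU2 :: "nat \<Rightarrow> (complex^2^2) set set" where
  "PSU2 n = (\<lambda>A. r_coset (U2 n) (scalars n) A) ` SU2_set n"

definition mu :: "nat \<Rightarrow> complex monoid" where
  "mu n = \<lparr>carrier = {z. z ^ n = 1}, mult = (*), one = 1\<rparr>"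

definition mu_squares :: "nat \<Rightarrow> complex set" where
  "mu_squares n = {z ^ 2 | z. z ^ n = 1}"

end

theory Submission
  imports Defs
begin

text \<open>
  Let \<open>n = 2\<^sup>s\<close> or \<open>n = 3 \<cdot> 2\<^sup>s\<close>, let \<open>\<eta>\<close> be a primitive \<open>2\<^sup>s\<close>-th and \<open>\<omega>\<close> a primitive
  cube root of unity, so that \<open>R\<^sub>n \<subseteq> \<int>[\<eta>, \<omega>][1/2]\<close>. The determinant induces a homomorphism
  \<open>PU\<^sub>2(R\<^sub>n) \<rightarrow> \<mu>\<^sub>n/\<mu>\<^sub>n\<^sup>2\<close>; it is onto because \<open>diag(1, z)\<close> has determinant \<open>z\<close>, and its
  kernel is \<open>PSU\<^sub>2(R\<^sub>n)\<close> because a unitary matrix whose determinant is a square \<open>z\<^sup>2\<close>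
  becomes special unitary after scaling by \<open>z\<^sup>-\<^sup>1\<close>. Both steps need that every
  \<open>u \<in> R\<^sub>n\<close> with \<open>u \<cdot> cnj u = 1\<close> is an \<open>n\<close>-th root of unity.

  For this write \<open>2\<^sup>k u = A + B \<omega>\<close> with \<open>A, B \<in> \<int>[\<eta>]\<close>; then
  \<open>A \<cdot> cnj A + B \<cdot> cnj B - A \<cdot> cnj B = 4\<^sup>k\<close>. The element \<open>\<pi> = 1 - \<eta>\<close> satisfies \<open>\<pi>\<^bsup>M\<^esup> = 2 \<cdot> unit\<close>
  (\<open>M = 2\<^bsup>s-1\<^esup>\<close>) and \<open>\<int>[\<eta>]/\<pi> = \<bbbF>\<^sub>2\<close>, where the form \<open>a\<^sup>2 - ab + b\<^sup>2\<close> is anisotropic; a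
  \<open>\<pi>\<close>-adic descent therefore makes \<open>A\<close> and \<open>B\<close> divisible by \<open>2\<^sup>k\<close>. After cancelling, the
  constant coordinate with respect to the basis \<open>1, \<eta>, \<dots>, \<eta>\<^bsup>M-1\<^esup>\<close> turns
  \<open>A \<cdot> cnj A + B \<cdot> cnj B - A \<cdot> cnj B = 1\<close> into a sum of positive definite binary forms in the integer
  coordinates of \<open>A\<close> and \<open>B\<close> equal to \<open>1\<close>. Hence \<open>A = a \<eta>\<^sup>j\<close>, \<open>B = b \<eta>\<^sup>j\<close> with \<open>a + b \<omega>\<close> a
  unit of \<open>\<int>[\<omega>]\<close>, i.e. \<open>u = \<plusminus>\<eta>\<^sup>j \<omega>\<^sup>e\<close>. That \<open>1, \<eta>, \<dots>, \<eta>\<^bsup>M-1\<^esup>\<close> is a basis rests on the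
  irreducibility of \<open>X\<^sup>M + 1\<close> (Eisenstein's criterion at \<open>2\<close>).
\<close>

section \<open>Integer polynomials\<close>

lemma even_choose_two_power:
  assumes "0 < k" "k < 2 ^ r"
  shows "even ((2::nat) ^ r choose k)"
proof (rule ccontr)
  assume "odd (2 ^ r choose k)"
  then have "coprime ((2::nat) ^ r) (2 ^ r choose k)"
    by (simp add: coprime_commute)
  moreover have "(2::nat) ^ r dvd k * (2 ^ r choose k)"
    using times_binomial_minus1_eq[OF assms(1), of "2 ^ r"] by simp
  ultimately have "(2::nat) ^ r dvd k"
    using coprime_dvd_mult_left_iff by blast
  with assms show False
    by (simp add: nat_dvd_not_less)
qed

lemma eisenstein_criterion_aux:
  fixes F G H :: "int poly" and p :: int
  assumes p: "prime p" and FGH: "F = G * H"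
    and low: "\<And>k. k < degree F \<Longrightarrow> p dvd coeff F k"
    and lead: "\<not> p dvd lead_coeff F" and const: "\<not> p\<^sup>2 dvd coeff F 0"
    and G0: "p dvd coeff G 0"
  shows "degree H = 0"
proof (rule ccontr)
  assume H_deg: "degree H \<noteq> 0"
  have "F \<noteq> 0"
    using lead by auto
  then have "G \<noteq> 0" "H \<noteq> 0"
    using FGH by auto
  then have deg_F: "degree F = degree G + degree H"
    using FGH degree_mult_eq by blast
  have "\<not> p dvd lead_coeff G"
    using lead by (auto simp: FGH lead_coeff_mult)
  have "coeff F 0 = coeff G 0 * coeff H 0"
    by (simp add: FGH coeff_mult_0)
  then have H0: "\<not> p dvd coeff H 0"
    using G0 const by (metis mult_dvd_mono power2_eq_square)
  define i where "i = (LEAST i. \<not> p dvd coeff G i)"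
  have Gi: "\<not> p dvd coeff G i"
    unfolding i_def by (rule LeastI) fact
  have "i \<le> degree G"
    unfolding i_def by (rule Least_le) fact
  then have "i < degree F"
    using deg_F H_deg by linarith
  have below_i: "p dvd coeff G j" if "j < i" for j
    using not_less_Least[of j "\<lambda>i. \<not> p dvd coeff G i"] that by (simp add: i_def)
  have "coeff F i = (\<Sum>j<i. coeff G j * coeff H (i - j)) + coeff G i * coeff H 0"
    by (simp add: FGH coeff_mult lessThan_Suc_atMost[symmetric])
  moreover have "p dvd (\<Sum>j<i. coeff G j * coeff H (i - j))"
    by (intro dvd_sum dvd_mult2 below_i) simp
  moreover have "\<not> p dvd coeff G i * coeff H 0"
    using p Gi H0 by (simp add: prime_dvd_mult_iff)
  ultimately have "\<not> p dvd coeff F i"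
    by (simp add: dvd_add_right_iff)
  with low \<open>i < degree F\<close> show False
    by blast
qed

lemma eisenstein_criterion:
  fixes F G H :: "int poly" and p :: int
  assumes p: "prime p" and FGH: "F = G * H"
    and low: "\<And>k. k < degree F \<Longrightarrow> p dvd coeff F k"
    and lead: "\<not> p dvd lead_coeff F" and const: "\<not> p\<^sup>2 dvd coeff F 0"
  shows "degree G = 0 \<or> degree H = 0"
proof (cases "degree F = 0")
  case True
  have "F \<noteq> 0"
    using lead by auto
  with True show ?thesis
    using FGH degree_mult_eq by fastforce
next
  case False
  then have "p dvd coeff G 0 * coeff H 0"
    using low[of 0] by (simp add: FGH coeff_mult_0)
  then consider "p dvd coeff G 0" | "p dvd coeff H 0"
    using p prime_dvd_mult_iff by blast
  then show ?thesis
  proof cases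
    case 1
    from eisenstein_criterion_aux[OF p FGH low lead const this] show ?thesis ..
  next
    case 2
    from FGH have "F = H * G"
      by (simp add: mult.commute)
    from eisenstein_criterion_aux[OF p this low lead const 2] show ?thesis ..
  qed
qed

lemma pcompose_power: "pcompose (p ^ k) q = pcompose p q ^ k"
  by (induction k) (simp_all add: pcompose_1 pcompose_mult)

lemma X_pow_two_power_plus_one_factors:
  fixes G H :: "int poly"
  assumes "[:0, 1:] ^ 2 ^ r + 1 = G * H"
  shows "degree G = 0 \<or> degree H = 0"
proof -
  define M :: nat where "M = 2 ^ r"
  define q :: "int poly" where "q = [:1, 1:]"
  define F where "F = q ^ M + 1"
  have "F = pcompose ([:0, 1:] ^ M + 1) q"
    by (simp add: F_def pcompose_add pcompose_power pcompose_1 q_def pcompose_pCons)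
  then have FGH: "F = pcompose G q * pcompose H q"
    using assms by (simp add: M_def pcompose_mult)
  have coeff_qM: "coeff (q ^ M) k = int (M choose k)" if "k \<le> M" for k
    using that by (simp add: q_def coeff_linear_poly_power)
  have deg_F: "degree F = M"
    unfolding F_def using degree_add_eq_left[of 1 "q ^ M"]
    by (simp add: q_def degree_power_eq M_def)
  have "degree (pcompose G q) = 0 \<or> degree (pcompose H q) = 0"
  proof (rule eisenstein_criterion[OF _ FGH])
    show "prime (2::int)"
      by simp
    show "2 dvd coeff F k" if "k < degree F" for k
    proof (cases "k = 0")
      case True
      then show ?thesis
        using coeff_qM[of 0] by (simp add: F_def)
    next
      case False
      then have "even (M choose k)"
        using that deg_F even_choose_two_power[of k r] by (simp add: M_def)
      then show ?thesis
        using that deg_F coeff_qM[of k] False by (simp add: F_def)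
    qed
    show "\<not> 2 dvd lead_coeff F"
      using deg_F coeff_qM[of M] by (simp add: F_def M_def)
    show "\<not> 2\<^sup>2 dvd coeff F 0"
      using coeff_qM[of 0] by (simp add: F_def)
  qed
  then show ?thesis
    by (simp add: degree_pcompose q_def)
qed

lemma map_poly_of_int_add:
  "map_poly (of_int :: int \<Rightarrow> 'a::comm_ring_1) (p + q) = map_poly of_int p + map_poly of_int q"
  by (rule poly_eqI) (simp add: coeff_map_poly)

lemma map_poly_of_int_mult:
  "map_poly (of_int :: int \<Rightarrow> 'a::comm_ring_1) (p * q) = map_poly of_int p * map_poly of_int q"
  by (rule poly_eqI) (simp add: coeff_map_poly coeff_mult of_int_sum)

lemma map_poly_of_int_smult:
  "map_poly (of_int :: int \<Rightarrow> 'a::comm_ring_1) (smult c p) = smult (of_int c) (map_poly of_int p)"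
  by (rule poly_eqI) (simp add: coeff_map_poly)

lemma map_poly_of_int_power:
  "map_poly (of_int :: int \<Rightarrow> 'a::comm_ring_1) (p ^ k) = map_poly of_int p ^ k"
  by (induction k) (simp_all add: map_poly_of_int_mult)

lemma poly_map_poly_of_int_sum_monom:
  fixes x :: "'a::comm_ring_1"
  shows "poly (map_poly of_int (\<Sum>i<n. monom (c i) i)) x = (\<Sum>i<n. of_int (c i) * x ^ i)"
  by (induction n) (simp_all add: map_poly_of_int_add map_poly_monom poly_monom)

lemma irreducible_smult_factors:
  fixes F P Q :: "int poly"
  assumes F_prim: "content F = 1"
    and F_irred: "\<And>G H. F = G * H \<Longrightarrow> degree G = 0 \<or> degree H = 0"
    and "smult a F = P * Q" and "a \<noteq> 0"
  shows "degree P = 0 \<or> degree Q = 0"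
proof -
  have "smult (unit_factor a) F = primitive_part P * primitive_part Q"
    using arg_cong[OF assms(3), of primitive_part] F_prim
    by (simp add: primitive_part_mult primitive_part_smult primitive_part_prim)
  then have "smult (unit_factor a) (smult (unit_factor a) F)
      = smult (unit_factor a) (primitive_part P) * primitive_part Q"
    by simp
  then have "F = smult (unit_factor a) (primitive_part P) * primitive_part Q"
    using \<open>a \<noteq> 0\<close> by (simp add: sgn_mult_self_eq)
  moreover have "unit_factor a \<noteq> 0"
    using \<open>a \<noteq> 0\<close> by (simp add: sgn_if)
  ultimately show ?thesis
    using F_irred by fastforce
qed

lemma irreducible_root_degree_le:
  fixes F P :: "int poly" and x :: "'a::{idom, ring_char_0}"
  assumes F_prim: "content F = 1"
    and F_irred: "\<And>G H. F = G * H \<Longrightarrow> degree G = 0 \<or> degree H = 0"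
    and F_root: "poly (map_poly of_int F) x = 0"
    and "poly (map_poly of_int P) x = 0" and "P \<noteq> 0"
  shows "degree F \<le> degree P"
  using assms(4,5)
proof (induction "degree P" arbitrary: P rule: less_induct)
  case less
  show ?case
  proof (rule ccontr)
    assume small: "\<not> degree F \<le> degree P"
    define r where "r = pseudo_mod F P"
    obtain a q where "a \<noteq> 0" and aF: "smult a F = P * q + r"
      using pseudo_mod(1)[OF less.prems(2)] unfolding r_def by blast
    have "poly (map_poly of_int r) x = 0"
      using arg_cong[OF aF, of "\<lambda>p. poly (map_poly of_int p) x"] F_root less.prems(1)
      by (simp add: map_poly_of_int_add map_poly_of_int_mult map_poly_of_int_smult)
    moreover have "r = 0 \<or> degree r < degree P"
      using pseudo_mod(2)[OF less.prems(2)] unfolding r_def by blast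
    ultimately have "r = 0"
      using less.hyps small by fastforce
    have "degree P \<noteq> 0"
    proof
      assume "degree P = 0"
      then obtain c where "P = [:c:]"
        by (metis degree_eq_zeroE)
      with less.prems show False
        by (simp add: map_poly_pCons)
    qed
    have aF': "smult a F = P * q"
      using aF \<open>r = 0\<close> by simp
    have "F \<noteq> 0"
      using F_prim by auto
    with aF' \<open>a \<noteq> 0\<close> have "q \<noteq> 0"
      by auto
    with aF' \<open>a \<noteq> 0\<close> less.prems(2) have "degree F = degree P + degree q"
      by (metis degree_mult_eq degree_smult_eq)
    with irreducible_smult_factors[OF F_prim F_irred aF' \<open>a \<noteq> 0\<close>] \<open>degree P \<noteq> 0\<close> small
    show False
      by auto
  qed
qed

lemma root_of_X_pow_two_power_plus_one:
  fixes x :: "'a::{idom, ring_char_0}" and P :: "int poly"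
  assumes "x ^ 2 ^ r = -1" and "poly (map_poly of_int P) x = 0" and "degree P < 2 ^ r"
  shows "P = 0"
proof (rule ccontr)
  assume "P \<noteq> 0"
  define F :: "int poly" where "F = [:0, 1:] ^ 2 ^ r + 1"
  have deg_F: "degree F = 2 ^ r"
    unfolding F_def using degree_add_eq_left[of 1 "[:0, 1::int:] ^ 2 ^ r"]
    by (simp add: degree_power_eq)
  have "lead_coeff F = 1"
    unfolding deg_F by (simp add: F_def coeff_linear_power[of 0, simplified])
  then have "content F dvd 1"
    by (metis content_dvd_coeff)
  then have "content F = 1"
    by (metis normalize_content is_unit_normalize normalize_1)
  moreover have "poly (map_poly of_int F) x = 0"
    using assms(1) by (simp add: F_def map_poly_of_int_add map_poly_of_int_power map_poly_pCons)
  moreover have "degree G = 0 \<or> degree H = 0" if "F = G * H" for G H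
    using that X_pow_two_power_plus_one_factors[of r G H] by (simp add: F_def)
  ultimately have "degree F \<le> degree P"
    using irreducible_root_degree_le[OF _ _ _ assms(2) \<open>P \<noteq> 0\<close>] by blast
  with assms(3) deg_F show False
    by simp
qed

section \<open>Subrings of an integral domain\<close>

locale int_subring =
  fixes S :: "'a::idom set"
  assumes add_closed: "a \<in> S \<Longrightarrow> b \<in> S \<Longrightarrow> a + b \<in> S"
    and mult_closed: "a \<in> S \<Longrightarrow> b \<in> S \<Longrightarrow> a * b \<in> S"
    and of_int_closed: "of_int k \<in> S"
begin

lemma zero_closed: "0 \<in> S"
  using of_int_closed[of 0] by simp

lemma one_closed: "1 \<in> S"
  using of_int_closed[of 1] by simp

lemma of_nat_closed: "of_nat k \<in> S"
  using of_int_closed[of "int k"] by simp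

lemma numeral_closed: "numeral k \<in> S"
  using of_int_closed[of "numeral k"] by simp

lemma uminus_closed: "a \<in> S \<Longrightarrow> - a \<in> S"
  using mult_closed[OF of_int_closed[of "-1"]] by simp

lemma diff_closed: "a \<in> S \<Longrightarrow> b \<in> S \<Longrightarrow> a - b \<in> S"
  using add_closed[OF _ uminus_closed] by simp

lemma power_closed: "a \<in> S \<Longrightarrow> a ^ k \<in> S"
  by (induction k) (simp_all add: one_closed mult_closed)

lemma sum_closed: "(\<And>i. i \<in> I \<Longrightarrow> f i \<in> S) \<Longrightarrow> sum f I \<in> S"
  by (induction I rule: infinite_finite_induct) (simp_all add: zero_closed add_closed)

lemma poly_closed: "z \<in> S \<Longrightarrow> poly (map_poly of_int p) z \<in> S"
  by (induction p) (simp_all add: map_poly_pCons zero_closed add_closed mult_closed of_int_closed)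

end

definition dvd_in :: "'a::times set \<Rightarrow> 'a \<Rightarrow> 'a \<Rightarrow> bool" where
  "dvd_in S a b \<longleftrightarrow> (\<exists>c\<in>S. b = a * c)"

context int_subring
begin

lemma dvd_inI: "c \<in> S \<Longrightarrow> b = a * c \<Longrightarrow> dvd_in S a b"
  unfolding dvd_in_def by blast

lemma dvd_inE:
  assumes "dvd_in S a b"
  obtains c where "c \<in> S" "b = a * c"
  using assms unfolding dvd_in_def by blast

lemma dvd_in_refl: "dvd_in S a a"
  by (rule dvd_inI[OF one_closed]) simp

lemma dvd_in_0: "dvd_in S a 0"
  by (rule dvd_inI[OF zero_closed]) simp

lemma one_dvd_in: "b \<in> S \<Longrightarrow> dvd_in S 1 b"
  by (rule dvd_inI) simp_all

lemma dvd_in_add: "dvd_in S a x \<Longrightarrow> dvd_in S a y \<Longrightarrow> dvd_in S a (x + y)"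
  unfolding dvd_in_def by (metis add_closed distrib_left)

lemma dvd_in_diff: "dvd_in S a x \<Longrightarrow> dvd_in S a y \<Longrightarrow> dvd_in S a (x - y)"
  unfolding dvd_in_def by (metis diff_closed right_diff_distrib)

lemma dvd_in_uminus: "dvd_in S a x \<Longrightarrow> dvd_in S a (- x)"
  unfolding dvd_in_def by (metis uminus_closed mult_minus_right)

lemma dvd_in_mult_right: "dvd_in S a x \<Longrightarrow> y \<in> S \<Longrightarrow> dvd_in S a (x * y)"
  unfolding dvd_in_def by (metis mult_closed mult.assoc)

lemma dvd_in_mult_left: "dvd_in S a x \<Longrightarrow> y \<in> S \<Longrightarrow> dvd_in S a (y * x)"
  using dvd_in_mult_right by (simp add: mult.commute)

lemma dvd_in_mult_mono: "dvd_in S a x \<Longrightarrow> dvd_in S b y \<Longrightarrow> dvd_in S (a * b) (x * y)"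
  unfolding dvd_in_def by (metis mult_closed mult.assoc mult.left_commute)

lemma dvd_in_trans: "dvd_in S a b \<Longrightarrow> dvd_in S b c \<Longrightarrow> dvd_in S a c"
  unfolding dvd_in_def by (metis mult_closed mult.assoc)

lemma dvd_in_sum: "(\<And>i. i \<in> I \<Longrightarrow> dvd_in S a (f i)) \<Longrightarrow> dvd_in S a (sum f I)"
  by (induction I rule: infinite_finite_induct) (simp_all add: dvd_in_0 dvd_in_add)

lemma dvd_in_power_le: "a \<in> S \<Longrightarrow> m \<le> k \<Longrightarrow> dvd_in S (a ^ m) (a ^ k)"
  unfolding dvd_in_def by (metis power_closed power_add le_add_diff_inverse)

lemma dvd_in_mult_cancel: "c \<noteq> 0 \<Longrightarrow> dvd_in S (c * a) (c * b) \<Longrightarrow> dvd_in S a b"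
  by (elim dvd_inE, rule dvd_inI) (auto simp: mult.assoc)

lemma two_dvd_in_power_two_power_diff:
  assumes "a \<in> S" "b \<in> S"
  shows "dvd_in S 2 ((a - b) ^ 2 ^ r - (a ^ 2 ^ r - b ^ 2 ^ r))"
proof (induction r)
  case 0
  show ?case
    by (simp add: dvd_in_0)
next
  case (Suc r)
  define A B where "A = a ^ 2 ^ r" and "B = b ^ 2 ^ r"
  have AB: "A \<in> S" "B \<in> S"
    using assms by (simp_all add: A_def B_def power_closed)
  from Suc obtain w where "w \<in> S" and w: "(a - b) ^ 2 ^ r = A - B + 2 * w"
    by (auto simp: A_def B_def algebra_simps elim!: dvd_inE)
  have sq: "x ^ 2 ^ Suc r = (x ^ 2 ^ r)\<^sup>2" for x :: 'a
    by (simp add: mult.commute flip: power_mult)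
  have "(a - b) ^ 2 ^ Suc r - (a ^ 2 ^ Suc r - b ^ 2 ^ Suc r)
      = 2 * (B\<^sup>2 - A * B + 2 * w * (A - B) + 2 * w\<^sup>2)"
    unfolding sq w by (simp add: A_def B_def power2_eq_square algebra_simps)
  then show ?case
    by (rule dvd_inI[rotated])
      (simp add: AB \<open>w \<in> S\<close> add_closed diff_closed mult_closed power_closed numeral_closed)
qed

end

definition int_adjoin :: "'a::comm_ring_1 \<Rightarrow> 'a set" where
  "int_adjoin z = {poly (map_poly of_int p) z | p. True}"

interpretation int_adjoin: int_subring "int_adjoin z" for z :: "'a::idom"
proof
  fix a b assume "a \<in> int_adjoin z" "b \<in> int_adjoin z"
  then obtain p q where "a = poly (map_poly of_int p) z" "b = poly (map_poly of_int q) z"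
    by (auto simp: int_adjoin_def)
  then have "a + b = poly (map_poly of_int (p + q)) z" "a * b = poly (map_poly of_int (p * q)) z"
    by (simp_all add: map_poly_of_int_add map_poly_of_int_mult)
  then show "a + b \<in> int_adjoin z" "a * b \<in> int_adjoin z"
    unfolding int_adjoin_def by blast+
next
  show "of_int k \<in> int_adjoin z" for k
    unfolding int_adjoin_def by (auto intro!: exI[of _ "[:k:]"] simp: map_poly_pCons)
qed

lemma int_adjoin_generator: "z \<in> int_adjoin z"
  unfolding int_adjoin_def by (auto intro!: exI[of _ "[:0, 1:]"] simp: map_poly_pCons)

lemma int_adjoin_subset:
  assumes "int_subring S" and "z \<in> S"
  shows "int_adjoin z \<subseteq> S"
  using int_subring.poly_closed[OF assms] by (auto simp: int_adjoin_def)

lemma int_adjoin_cnj: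
  assumes "cnj z \<in> int_adjoin z" and "x \<in> int_adjoin z"
  shows "cnj x \<in> int_adjoin z"
proof -
  obtain p where "x = poly (map_poly of_int p) z"
    using assms(2) by (auto simp: int_adjoin_def)
  moreover have "map_poly cnj (map_poly of_int p) = (map_poly of_int p :: complex poly)"
    by (rule poly_eqI) (simp add: coeff_map_poly)
  ultimately have "cnj x = poly (map_poly of_int p) (cnj z)"
    by (simp add: poly_cnj)
  then show ?thesis
    using int_adjoin.poly_closed[OF assms(1)] by simp
qed

lemma int_subring_adjoin_quadratic:
  assumes "int_subring S" and "c \<in> S" "d \<in> S" and w: "w\<^sup>2 = c + d * w"
  shows "int_subring {a + b * w | a b. a \<in> S \<and> b \<in> S}"
proof -
  interpret int_subring S by fact
  show ?thesis
  proof
    fix x y assume "x \<in> {a + b * w | a b. a \<in> S \<and> b \<in> S}" "y \<in> {a + b * w | a b. a \<in> S \<and> b \<in> S}"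
    then obtain a b a' b' where ab: "a \<in> S" "b \<in> S" "a' \<in> S" "b' \<in> S"
      and xy: "x = a + b * w" "y = a' + b' * w"
      by blast
    have "x + y = (a + a') + (b + b') * w"
      by (simp add: xy algebra_simps)
    then show "x + y \<in> {a + b * w | a b. a \<in> S \<and> b \<in> S}"
      using ab add_closed by blast
    have "x * y = a * a' + (a * b' + b * a') * w + b * b' * w\<^sup>2"
      by (simp add: xy algebra_simps power2_eq_square)
    also have "\<dots> = (a * a' + c * b * b') + (a * b' + b * a' + d * b * b') * w"
      by (simp add: w algebra_simps)
    finally show "x * y \<in> {a + b * w | a b. a \<in> S \<and> b \<in> S}"
      using ab \<open>c \<in> S\<close> \<open>d \<in> S\<close> by (blast intro: add_closed mult_closed)
  next
    show "of_int k \<in> {a + b * w | a b. a \<in> S \<and> b \<in> S}" for k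
      using of_int_closed zero_closed by force
  qed
qed

section \<open>Roots of unity and the rings \<open>R\<^sub>n\<close>\<close>

lemma zeta_pow: "zeta n ^ k = cis (2 * pi * real k / real n)"
  unfolding zeta_def Complex.DeMoivre by (simp add: field_simps)

lemma zeta_pow_n: "n > 0 \<Longrightarrow> zeta n ^ n = 1"
  by (simp add: zeta_pow)

lemma zeta_pow_mod:
  assumes "n > 0"
  shows "zeta n ^ k = zeta n ^ (k mod n)"
proof -
  have "zeta n ^ k = (zeta n ^ n) ^ (k div n) * zeta n ^ (k mod n)"
    by (simp flip: power_mult power_add)
  then show ?thesis
    by (simp add: zeta_pow_n[OF assms])
qed

lemma cnj_zeta: "n > 0 \<Longrightarrow> cnj (zeta n) = zeta n ^ (n - 1)"
proof -
  assume "n > 0"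
  then have "zeta n ^ (n - 1) * zeta n = 1"
    by (metis Suc_diff_1 power_Suc2 zeta_pow_n)
  then have "zeta n ^ (n - 1) = inverse (zeta n)"
    by (simp add: zeta_def field_simps)
  then show ?thesis
    by (simp add: zeta_def cis_cnj)
qed

lemma root_of_unity_eq_zeta_pow:
  assumes "n > 0" and "z ^ n = 1"
  obtains k where "k < n" and "z = zeta n ^ k"
  using Complex.bij_betw_roots_unity[OF assms(1)] assms(2) unfolding bij_betw_def
  by (auto simp: zeta_pow)

lemma root_of_unity_mult_cnj:
  assumes "n > 0" and "z ^ n = 1"
  shows "z * cnj z = 1"
proof -
  have "norm z = 1"
    using power_eq_1_iff assms by blast
  then show ?thesis
    by (simp add: complex_norm_square[symmetric])
qed

lemma zeta_pow_eq_iff: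
  assumes "n > 0"
  shows "zeta n ^ a = zeta n ^ b \<longleftrightarrow> a mod n = b mod n"
proof -
  have inj: "inj_on (\<lambda>k. cis (2 * pi * real k / real n)) {..<n}"
    using Complex.bij_betw_roots_unity[OF assms] unfolding bij_betw_def by blast
  have "zeta n ^ (a mod n) = zeta n ^ (b mod n) \<longleftrightarrow> a mod n = b mod n"
    using inj_onD[OF inj, of "a mod n" "b mod n"] assms by (auto simp: zeta_pow)
  then show ?thesis
    by (simp flip: zeta_pow_mod[OF assms])
qed

lemma Rn_iff: "x \<in> Rn n \<longleftrightarrow> (\<exists>y \<in> int_adjoin (zeta n). \<exists>k::nat. x = y / 2 ^ k)"
  unfolding Rn_def int_adjoin_def by blast

interpretation Rn: int_subring "Rn n" for n
proof
  fix x y assume "x \<in> Rn n" "y \<in> Rn n"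
  then obtain a b k l where ab: "a \<in> int_adjoin (zeta n)" "b \<in> int_adjoin (zeta n)"
    and xy: "x = a / 2 ^ k" "y = b / 2 ^ l"
    unfolding Rn_iff by blast
  have "x + y = (2 ^ l * a + 2 ^ k * b) / (2 ^ k * 2 ^ l)" "x * y = (a * b) / (2 ^ k * 2 ^ l)"
    unfolding xy by (simp_all add: add_frac_eq mult.commute)
  then have "x + y = (2 ^ l * a + 2 ^ k * b) / 2 ^ (k + l)" "x * y = (a * b) / 2 ^ (k + l)"
    by (simp_all add: power_add)
  moreover have "2 ^ l * a + 2 ^ k * b \<in> int_adjoin (zeta n)" "a * b \<in> int_adjoin (zeta n)"
    using ab by (simp_all add: int_adjoin.add_closed int_adjoin.mult_closed
        int_adjoin.power_closed int_adjoin.numeral_closed)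
  ultimately show "x + y \<in> Rn n" "x * y \<in> Rn n"
    unfolding Rn_iff by blast+
next
  show "of_int k \<in> Rn n" for k
    unfolding Rn_iff by (auto intro!: bexI[of _ "of_int k"] exI[of _ 0] int_adjoin.of_int_closed)
qed

lemma int_adjoin_zeta_subset_Rn: "int_adjoin (zeta n) \<subseteq> Rn n"
proof
  fix x assume "x \<in> int_adjoin (zeta n)"
  moreover have "x = x / 2 ^ 0"
    by simp
  ultimately show "x \<in> Rn n"
    unfolding Rn_iff by blast
qed

lemma root_of_unity_in_Rn:
  assumes "n > 0" and "z ^ n = 1"
  shows "z \<in> Rn n"
proof -
  obtain k where "z = zeta n ^ k"
    using root_of_unity_eq_zeta_pow[OF assms] by blast
  then show ?thesis
    using int_adjoin_zeta_subset_Rn int_adjoin.power_closed[OF int_adjoin_generator] by blast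
qed

lemma Rn_cnj:
  assumes "n > 0" and "x \<in> Rn n"
  shows "cnj x \<in> Rn n"
proof -
  obtain y k where y: "y \<in> int_adjoin (zeta n)" and "x = y / 2 ^ k"
    using assms(2) unfolding Rn_iff by blast
  then have "cnj x = cnj y / 2 ^ k"
    by simp
  moreover have "cnj (zeta n) \<in> int_adjoin (zeta n)"
    by (simp add: cnj_zeta[OF assms(1)] int_adjoin.power_closed int_adjoin_generator)
  ultimately show ?thesis
    unfolding Rn_iff using int_adjoin_cnj[OF _ y] by blast
qed

definition \<omega> :: complex where
  "\<omega> = cis (2 * pi / 3)"

lemma omega_cube: "\<omega> ^ 3 = 1"
  unfolding \<omega>_def Complex.DeMoivre by simp

lemma omega_square: "\<omega>\<^sup>2 = - 1 - \<omega>"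
proof -
  have "Im \<omega> > 0"
    unfolding \<omega>_def by (simp add: sin_gt_zero)
  then have "\<omega> \<noteq> 1"
    by auto
  moreover have "(\<omega> - 1) * (\<omega>\<^sup>2 + \<omega> + 1) = \<omega> ^ 3 - 1"
    by (simp add: power2_eq_square power3_eq_cube algebra_simps)
  ultimately have "\<omega>\<^sup>2 + \<omega> + 1 = 0"
    using omega_cube by simp
  then show ?thesis
    by algebra
qed

lemma cnj_omega: "cnj \<omega> = - 1 - \<omega>"
proof -
  have "cnj \<omega> * \<omega> = 1"
    unfolding \<omega>_def by (simp add: cis_cnj cis_mult)
  then show ?thesis
    using omega_square by algebra
qed

lemma sum_nonneg_int_eq_1:
  fixes t :: "'i \<Rightarrow> int"
  assumes "finite I" and "\<And>i. i \<in> I \<Longrightarrow> t i \<ge> 0" and "sum t I = 1"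
  obtains i0 where "i0 \<in> I" "t i0 = 1" "\<And>i. i \<in> I \<Longrightarrow> i \<noteq> i0 \<Longrightarrow> t i = 0"
proof -
  obtain i0 where i0: "i0 \<in> I" "t i0 \<noteq> 0"
    using assms(3) sum.neutral by (metis zero_neq_one)
  have split: "sum t I = t i0 + sum t (I - {i0})"
    using assms(1) i0(1) by (simp add: sum.remove)
  moreover have "sum t (I - {i0}) \<ge> 0"
    by (rule sum_nonneg) (use assms(2) in auto)
  moreover have "t i0 \<ge> 1"
    using assms(2)[OF i0(1)] i0(2) by linarith
  ultimately have "t i0 = 1" and rest: "sum t (I - {i0}) = 0"
    using assms(3) by linarith+
  moreover have "t i = 0" if "i \<in> I" "i \<noteq> i0" for i
    using rest sum_nonneg_eq_0_iff[of "I - {i0}" t] assms(1,2) that by auto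
  ultimately show ?thesis
    using that i0(1) by blast
qed

lemma eisenstein_unit:
  fixes a b :: int
  assumes "a\<^sup>2 - a * b + b\<^sup>2 = 1"
  shows "\<exists>e. of_int a + of_int b * \<omega> = \<omega> ^ e \<or> of_int a + of_int b * \<omega> = - (\<omega> ^ e)"
proof -
  have "(2 * a - b)\<^sup>2 + 3 * b\<^sup>2 = 4"
    using assms by (simp add: power2_eq_square algebra_simps)
  then have "b\<^sup>2 \<le> 1"
    using zero_le_power2[of "2 * a - b"] by linarith
  then have "\<bar>b\<bar> \<le> 1"
    by (simp add: abs_square_le_1)
  then consider "b = 0" | "b = 1" | "b = -1"
    by linarith
  then have "(a, b) \<in> {(1, 0), (-1, 0), (0, 1), (0, -1), (1, 1), (-1, -1)}"
  proof cases
    case 1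
    then have "a\<^sup>2 = 1"
      using assms by simp
    with 1 show ?thesis
      by (auto simp: power2_eq_1_iff)
  next
    case 2
    then have "a * (a - 1) = 0"
      using assms by (simp add: power2_eq_square algebra_simps)
    with 2 show ?thesis
      by auto
  next
    case 3
    then have "a * (a + 1) = 0"
      using assms by (simp add: power2_eq_square algebra_simps)
    with 3 show ?thesis
      by (auto simp: add_eq_0_iff)
  qed
  moreover have "1 + \<omega> = - (\<omega> ^ 2)" "- 1 - \<omega> = \<omega> ^ 2"
    using omega_square by simp_all
  ultimately show ?thesis
    by (auto intro: exI[of _ 0] exI[of _ 1] exI[of _ 2])
qed

definition herm_form :: "complex \<Rightarrow> complex \<Rightarrow> complex" where
  "herm_form A B = A * cnj A + B * cnj B - A * cnj B"

lemma mult_cnj_adjoin_omega: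
  "(A + B * \<omega>) * cnj (A + B * \<omega>) = herm_form A B + (B * cnj A - A * cnj B) * \<omega>"
  unfolding herm_form_def using cnj_omega omega_square by simp algebra

section \<open>The ring \<open>\<int>[\<eta>]\<close> for a primitive \<open>2\<^sup>s\<close>-th root of unity \<open>\<eta>\<close>\<close>

locale two_power_cyclotomic =
  fixes s :: nat
  assumes two_le_s: "2 \<le> s"
begin

definition M :: nat where
  "M = 2 ^ (s - 1)"

definition \<eta> :: complex where
  "\<eta> = cis (pi / M)"

definition \<pi> :: complex where
  "\<pi> = 1 - \<eta>"

abbreviation Z\<eta> :: "complex set" where
  "Z\<eta> \<equiv> int_adjoin \<eta>"

abbreviation dvd_eta :: "complex \<Rightarrow> complex \<Rightarrow> bool" (infix "dvd\<^sub>\<eta>" 50) where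
  "a dvd\<^sub>\<eta> b \<equiv> dvd_in Z\<eta> a b"

lemma double_M: "2 * M = 2 ^ s"
  using two_le_s by (simp add: M_def flip: power_Suc)

lemma even_M: "even M"
  using two_le_s by (simp add: M_def)

lemma two_le_M: "2 \<le> M"
  using power_increasing[of 1 "s - 1" "2::nat"] two_le_s by (simp add: M_def)

lemma eta_eq_zeta: "\<eta> = zeta (2 ^ s)"
  by (simp add: \<eta>_def zeta_def flip: double_M)

lemma eta_pow_M: "\<eta> ^ M = -1"
  using two_le_M by (simp add: \<eta>_def Complex.DeMoivre)

lemma eta_nonzero: "\<eta> \<noteq> 0"
  by (simp add: \<eta>_def)

lemma eta_pow_double_M: "\<eta> ^ (2 * M) = 1"
  by (simp add: power_mult eta_pow_M mult.commute[of 2])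

lemma eta_mult_cnj: "\<eta> * cnj \<eta> = 1"
  by (simp add: \<eta>_def cis_cnj cis_mult)

lemma cnj_eta: "cnj \<eta> = - (\<eta> ^ (M - 1))"
proof -
  have "\<eta> * - (\<eta> ^ (M - 1)) = 1"
    using eta_pow_M two_le_M by (simp flip: power_Suc)
  then show ?thesis
    using eta_mult_cnj by (metis mult.left_commute mult_1_right)
qed

lemma eta_in: "\<eta> \<in> Z\<eta>"
  by (rule int_adjoin_generator)

lemma cnj_in: "x \<in> Z\<eta> \<Longrightarrow> cnj x \<in> Z\<eta>"
  by (rule int_adjoin_cnj)
    (simp add: cnj_eta int_adjoin.uminus_closed int_adjoin.power_closed eta_in)

lemma pi_in: "\<pi> \<in> Z\<eta>"
  by (simp add: \<pi>_def int_adjoin.diff_closed int_adjoin.one_closed eta_in)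

lemma pi_nonzero: "\<pi> \<noteq> 0"
  using eta_pow_M by (auto simp: \<pi>_def)

lemma cnj_pi: "cnj \<pi> = - cnj \<eta> * \<pi>"
  using eta_mult_cnj by (simp add: \<pi>_def algebra_simps)

lemma coordinates_exist:
  assumes "x \<in> Z\<eta>"
  shows "\<exists>c. x = (\<Sum>j<M. of_int (c j) * \<eta> ^ j)"
proof -
  obtain p where x: "x = poly (map_poly of_int p) \<eta>"
    using assms by (auto simp: int_adjoin_def)
  define F :: "int poly" where "F = [:0, 1:] ^ M + 1"
  have deg_F: "degree F = M"
    unfolding F_def using degree_add_eq_left[of 1 "[:0, 1::int:] ^ M"] two_le_M
    by (simp add: degree_power_eq)
  have lead_F: "coeff F (degree F) = 1"
    unfolding deg_F using two_le_M by (simp add: F_def coeff_linear_power[of 0, simplified])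
  then have "F \<noteq> 0"
    by auto
  obtain q r where "pseudo_divmod p F = (q, r)"
    by fastforce
  from pseudo_divmod[OF \<open>F \<noteq> 0\<close> this] lead_F deg_F
  have p: "p = F * q + r" and deg_r: "r = 0 \<or> degree r < M"
    by auto
  have "poly (map_poly of_int F) \<eta> = 0"
    by (simp add: F_def map_poly_of_int_add map_poly_of_int_power map_poly_pCons eta_pow_M)
  then have "x = poly (map_poly of_int r) \<eta>"
    by (simp add: x p map_poly_of_int_add map_poly_of_int_mult)
  also have "r = (\<Sum>i<M. monom (coeff r i) i)"
    using poly_as_sum_of_monoms'[of r "M - 1"] deg_r two_le_M
    by (auto simp: lessThan_Suc_atMost[symmetric])
  finally show ?thesis
    by (auto simp: poly_map_poly_of_int_sum_monom)
qed

lemma coordinates_unique: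
  assumes "(\<Sum>j<M. of_int (c j) * \<eta> ^ j) = (\<Sum>j<M. of_int (d j) * \<eta> ^ j)" and "j < M"
  shows "c j = d j"
proof -
  define P where "P = (\<Sum>i<M. monom (c i - d i) i)"
  have "poly (map_poly of_int P) \<eta> = 0"
    using assms(1) by (simp add: P_def poly_map_poly_of_int_sum_monom algebra_simps sum_subtractf)
  moreover have coeff_P: "coeff P i = (if i < M then c i - d i else 0)" for i
    by (simp add: P_def coeff_sum)
  then have "degree P < 2 ^ (s - 1)"
    using two_le_M by (intro le_less_trans[OF degree_le[of "M - 1"]]) (auto simp: M_def)
  moreover have "\<eta> ^ 2 ^ (s - 1) = -1"
    using eta_pow_M by (simp add: M_def)
  ultimately have "P = 0"
    using root_of_X_pow_two_power_plus_one by blast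
  then show ?thesis
    using coeff_P[of j] assms(2) by simp
qed

definition coord :: "complex \<Rightarrow> nat \<Rightarrow> int" where
  "coord x = (SOME c. x = (\<Sum>j<M. of_int (c j) * \<eta> ^ j))"

lemma coord_expansion: "x \<in> Z\<eta> \<Longrightarrow> x = (\<Sum>j<M. of_int (coord x j) * \<eta> ^ j)"
  using someI_ex[OF coordinates_exist] unfolding coord_def .

lemma coord_eqI:
  assumes "x = (\<Sum>j<M. of_int (c j) * \<eta> ^ j)" and "j < M"
  shows "coord x j = c j"
proof -
  have "x \<in> Z\<eta>"
    unfolding assms(1)
    by (intro int_adjoin.sum_closed int_adjoin.mult_closed int_adjoin.of_int_closed
        int_adjoin.power_closed eta_in)
  then show ?thesis
    using coordinates_unique[OF _ assms(2)] coord_expansion assms(1) by metis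
qed

lemma coord_of_int:
  assumes "j < M"
  shows "coord (of_int k) j = (if j = 0 then k else 0)"
proof (rule coord_eqI[OF _ assms])
  have "(\<Sum>j<M. of_int (if j = 0 then k else 0) * \<eta> ^ j) = (\<Sum>j<M. if j = 0 then of_int k else 0)"
    by (rule sum.cong) auto
  also have "\<dots> = of_int k"
    using two_le_M by simp
  finally show "of_int k = (\<Sum>j<M. of_int (if j = 0 then k else 0) * \<eta> ^ j)" ..
qed

lemma coord_add:
  "x \<in> Z\<eta> \<Longrightarrow> y \<in> Z\<eta> \<Longrightarrow> j < M \<Longrightarrow> coord (x + y) j = coord x j + coord y j"
  by (rule coord_eqI, subst (1 2) coord_expansion) (simp_all add: sum.distrib algebra_simps)

lemma coord_diff:
  "x \<in> Z\<eta> \<Longrightarrow> y \<in> Z\<eta> \<Longrightarrow> j < M \<Longrightarrow> coord (x - y) j = coord x j - coord y j"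
  by (rule coord_eqI, subst (1 2) coord_expansion) (simp_all add: sum_subtractf algebra_simps)

lemma coord_of_int_mult:
  "y \<in> Z\<eta> \<Longrightarrow> j < M \<Longrightarrow> coord (of_int k * y) j = k * coord y j"
  by (rule coord_eqI, subst coord_expansion) (simp_all add: sum_distrib_left mult_ac)

lemma two_dvd_pi_pow_M: "2 dvd\<^sub>\<eta> \<pi> ^ M"
proof -
  have "2 dvd\<^sub>\<eta> (1 - \<eta>) ^ M - (1 ^ M - \<eta> ^ M)"
    unfolding M_def
    by (rule int_adjoin.two_dvd_in_power_two_power_diff) (simp_all add: int_adjoin.one_closed eta_in)
  then have "2 dvd\<^sub>\<eta> \<pi> ^ M - 2"
    by (simp add: \<pi>_def eta_pow_M)
  from int_adjoin.dvd_in_add[OF this int_adjoin.dvd_in_refl] show ?thesis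
    by simp
qed

lemma two_eq_pi_binomial_sum: "2 = - (\<Sum>i<M. of_nat (M choose Suc i) * (- \<pi>) ^ Suc i)"
proof -
  obtain M' where M': "M = Suc M'"
    using two_le_M by (cases M) auto
  have "-1 = (- \<pi> + 1) ^ M"
    using eta_pow_M by (simp add: \<pi>_def)
  also have "\<dots> = 1 + (\<Sum>i<M. of_nat (M choose Suc i) * (- \<pi>) ^ Suc i)"
    unfolding binomial_ring M' sum.atMost_Suc_shift by (simp add: lessThan_Suc_atMost)
  finally show ?thesis
    by (simp add: algebra_simps eq_neg_iff_add_eq_0)
qed

lemma pi_pow_M_dvd_two: "\<pi> ^ M dvd\<^sub>\<eta> 2"
proof -
  have "\<pi> ^ m dvd\<^sub>\<eta> 2" if "m \<le> M" for m
    using that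
  proof (induction m)
    case 0
    show ?case
      by (simp add: int_adjoin.one_dvd_in int_adjoin.numeral_closed)
  next
    case (Suc m)
    have "\<pi> ^ Suc m dvd\<^sub>\<eta> of_nat (M choose Suc i) * (- \<pi>) ^ Suc i" if "i < M" for i
    proof (cases "Suc i < M")
      case True
      then have "even (M choose Suc i)"
        unfolding M_def by (intro even_choose_two_power) (simp_all add: M_def)
      then obtain q where q: "M choose Suc i = 2 * q" ..
      have "of_nat q * (- 1) ^ Suc i \<in> Z\<eta>"
        by (intro int_adjoin.mult_closed int_adjoin.power_closed int_adjoin.of_nat_closed
            int_adjoin.uminus_closed int_adjoin.one_closed)
      moreover have "\<pi> ^ m * \<pi> ^ 1 dvd\<^sub>\<eta> 2 * \<pi> ^ Suc i"
        using Suc by (intro int_adjoin.dvd_in_mult_mono int_adjoin.dvd_in_power_le pi_in) simp_all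
      ultimately have "\<pi> ^ m * \<pi> ^ 1 dvd\<^sub>\<eta> (2 * \<pi> ^ Suc i) * (of_nat q * (- 1) ^ Suc i)"
        by (rule int_adjoin.dvd_in_mult_right[rotated])
      then show ?thesis
        by (simp add: q power_minus[of \<pi>] mult_ac)
    next
      case False
      then have "Suc i = M"
        using that by simp
      then show ?thesis
        using int_adjoin.dvd_in_power_le[OF pi_in Suc.prems] even_M by simp
    qed
    then show ?case
      by (subst two_eq_pi_binomial_sum) (intro int_adjoin.dvd_in_uminus int_adjoin.dvd_in_sum, simp)
  qed
  then show ?thesis
    by simp
qed

lemma pi_dvd_two: "\<pi> dvd\<^sub>\<eta> 2"
  using int_adjoin.dvd_in_trans[OF int_adjoin.dvd_in_power_le[OF pi_in, of 1 M] pi_pow_M_dvd_two]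
    two_le_M by simp

lemma not_pi_dvd_one: "\<not> \<pi> dvd\<^sub>\<eta> 1"
proof
  assume "\<pi> dvd\<^sub>\<eta> 1"
  then obtain y where y: "y \<in> Z\<eta>" "1 = \<pi> * y"
    by (rule int_adjoin.dvd_inE)
  obtain w where w: "w \<in> Z\<eta>" "\<pi> ^ M = 2 * w"
    using two_dvd_pi_pow_M by (rule int_adjoin.dvd_inE)
  define z where "z = w * y ^ M"
  have "z \<in> Z\<eta>"
    using w y by (simp add: z_def int_adjoin.mult_closed int_adjoin.power_closed)
  have "of_int 1 = (\<pi> * y) ^ M"
    using y by simp
  also have "\<dots> = of_int 2 * z"
    using w by (simp add: z_def power_mult_distrib)
  finally have "coord (of_int 1) 0 = coord (of_int 2 * z) 0"
    by simp
  then have "1 = 2 * coord z 0"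
    using two_le_M coord_of_int_mult[OF \<open>z \<in> Z\<eta>\<close>, of 0 2] coord_of_int[of 0 1] by simp
  then show False
    by presburger
qed

lemma pi_dvd_of_int_iff: "\<pi> dvd\<^sub>\<eta> of_int a \<longleftrightarrow> even a"
proof
  assume "even a"
  then have "of_int a = 2 * (of_int (a div 2) :: complex)"
    by (metis dvd_mult_div_cancel of_int_mult of_int_numeral)
  then show "\<pi> dvd\<^sub>\<eta> of_int a"
    using int_adjoin.dvd_in_mult_right[OF pi_dvd_two int_adjoin.of_int_closed] by simp
next
  assume "\<pi> dvd\<^sub>\<eta> of_int a"
  show "even a"
  proof (rule ccontr)
    assume "odd a"
    then have "of_int a = (of_int (2 * (a div 2) + 1) :: complex)"
      by (simp add: odd_two_times_div_two_succ)
    then have "1 = of_int a - 2 * (of_int (a div 2) :: complex)"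
      by simp
    moreover have "\<pi> dvd\<^sub>\<eta> of_int a - 2 * of_int (a div 2)"
      using \<open>\<pi> dvd\<^sub>\<eta> of_int a\<close>
      by (intro int_adjoin.dvd_in_diff int_adjoin.dvd_in_mult_right pi_dvd_two int_adjoin.of_int_closed)
    ultimately show False
      using not_pi_dvd_one by simp
  qed
qed

lemma congruent_to_int:
  assumes "x \<in> Z\<eta>"
  obtains a where "\<pi> dvd\<^sub>\<eta> x - of_int a"
proof
  have "\<pi> dvd\<^sub>\<eta> \<eta> ^ j - 1" for j
  proof (rule int_adjoin.dvd_inI)
    show "\<eta> ^ j - 1 = \<pi> * - (\<Sum>i<j. \<eta> ^ i)"
      using one_diff_power_eq[of \<eta> j] by (simp add: \<pi>_def algebra_simps)
  qed (intro int_adjoin.uminus_closed int_adjoin.sum_closed int_adjoin.power_closed eta_in)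
  then have "\<pi> dvd\<^sub>\<eta> (\<Sum>j<M. of_int (coord x j) * (\<eta> ^ j - 1))"
    by (intro int_adjoin.dvd_in_sum int_adjoin.dvd_in_mult_left int_adjoin.of_int_closed)
  moreover have "x - of_int (\<Sum>j<M. coord x j) = (\<Sum>j<M. of_int (coord x j) * (\<eta> ^ j - 1))"
    by (subst (1) coord_expansion[OF assms]) (simp add: algebra_simps sum_subtractf)
  ultimately show "\<pi> dvd\<^sub>\<eta> x - of_int (\<Sum>j<M. coord x j)"
    by simp
qed

lemma eq_0_if_pi_powers_dvd:
  assumes "x \<in> Z\<eta>" and dvd: "\<And>m. \<pi> ^ m dvd\<^sub>\<eta> x"
  shows "x = 0"
proof (rule ccontr)
  assume "x \<noteq> 0"
  then obtain j where j: "j < M" "coord x j \<noteq> 0"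
    using coord_expansion[OF assms(1)] by (metis (no_types, lifting) lessThan_iff mult_eq_0_iff of_int_0 sum.neutral)
  define k where "k = nat \<bar>coord x j\<bar>"
  obtain w where w: "w \<in> Z\<eta>" "\<pi> ^ M = 2 * w"
    using two_dvd_pi_pow_M by (rule int_adjoin.dvd_inE)
  obtain y where y: "y \<in> Z\<eta>" "x = \<pi> ^ (M * k) * y"
    using dvd[of "M * k"] by (rule int_adjoin.dvd_inE)
  have x_eq: "x = of_int (2 ^ k) * (w ^ k * y)"
    using y w by (simp add: power_mult power_mult_distrib)
  have "coord x j = 2 ^ k * coord (w ^ k * y) j"
    unfolding x_eq using j(1) w y
    by (intro coord_of_int_mult) (simp_all add: int_adjoin.mult_closed int_adjoin.power_closed)
  then have "(2::int) ^ k dvd coord x j"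
    by simp
  from dvd_imp_le_int[OF j(2) this] have "(2::int) ^ k \<le> \<bar>coord x j\<bar>"
    by simp
  moreover have "int k < 2 ^ k"
    by (metis of_nat_less_numeral_power_cancel_iff of_nat_numeral less_exp)
  ultimately show False
    by (simp add: k_def)
qed

lemma pi_dvd_cnj_diff:
  assumes "x \<in> Z\<eta>"
  shows "\<pi> dvd\<^sub>\<eta> cnj x - x"
proof -
  obtain a where a: "\<pi> dvd\<^sub>\<eta> x - of_int a"
    using congruent_to_int[OF assms] .
  then obtain c where c: "c \<in> Z\<eta>" "x - of_int a = \<pi> * c"
    by (rule int_adjoin.dvd_inE)
  have "cnj x - of_int a = \<pi> * (- cnj \<eta> * cnj c)"
    using arg_cong[OF c(2), of cnj] by (simp add: cnj_pi)
  then have "\<pi> dvd\<^sub>\<eta> cnj x - of_int a"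
    by (rule int_adjoin.dvd_inI[rotated])
      (simp add: c(1) cnj_in eta_in int_adjoin.mult_closed int_adjoin.uminus_closed)
  from int_adjoin.dvd_in_diff[OF this a] show ?thesis
    by simp
qed

lemma pi_dvd_norm_form_imp:
  assumes "A \<in> Z\<eta>" "B \<in> Z\<eta>" and "\<pi> dvd\<^sub>\<eta> A\<^sup>2 - A * B + B\<^sup>2"
  shows "\<pi> dvd\<^sub>\<eta> A \<and> \<pi> dvd\<^sub>\<eta> B"
proof -
  obtain a b where a: "\<pi> dvd\<^sub>\<eta> A - of_int a" and b: "\<pi> dvd\<^sub>\<eta> B - of_int b"
    using congruent_to_int assms(1,2) by metis
  have "A\<^sup>2 - A * B + B\<^sup>2 - of_int (a\<^sup>2 - a * b + b\<^sup>2) =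
      (A - of_int a) * (A + of_int a) - ((A - of_int a) * B + of_int a * (B - of_int b))
      + (B - of_int b) * (B + of_int b)"
    by (simp add: power2_eq_square algebra_simps)
  moreover have "\<pi> dvd\<^sub>\<eta> (A - of_int a) * (A + of_int a) - ((A - of_int a) * B + of_int a * (B - of_int b))
      + (B - of_int b) * (B + of_int b)"
    using int_adjoin.dvd_in_mult_right[OF a, of "A + of_int a"]
      int_adjoin.dvd_in_mult_right[OF a assms(2)]
      int_adjoin.dvd_in_mult_left[OF b, of "of_int a"]
      int_adjoin.dvd_in_mult_right[OF b, of "B + of_int b"] assms(1,2)
    by (intro int_adjoin.dvd_in_add int_adjoin.dvd_in_diff)
      (simp_all add: int_adjoin.add_closed int_adjoin.of_int_closed)
  ultimately have "\<pi> dvd\<^sub>\<eta> A\<^sup>2 - A * B + B\<^sup>2 - of_int (a\<^sup>2 - a * b + b\<^sup>2)"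
    by simp
  from int_adjoin.dvd_in_diff[OF assms(3) this]
  have "even (a\<^sup>2 - a * b + b\<^sup>2)"
    by (simp only: diff_diff_eq2 add_diff_cancel_left' pi_dvd_of_int_iff)
  then have "even a" "even b"
    by (cases "even a"; cases "even b"; simp add: power2_eq_square)+
  then have "\<pi> dvd\<^sub>\<eta> of_int a" "\<pi> dvd\<^sub>\<eta> of_int b"
    by (simp_all add: pi_dvd_of_int_iff)
  from int_adjoin.dvd_in_add[OF a this(1)] int_adjoin.dvd_in_add[OF b this(2)] show ?thesis
    by simp
qed

lemma pi_power_dvd_form_imp:
  fixes Q :: "complex \<Rightarrow> complex \<Rightarrow> complex"
  assumes Q_mod_pi: "\<And>A B. A \<in> Z\<eta> \<Longrightarrow> B \<in> Z\<eta> \<Longrightarrow> \<pi> dvd\<^sub>\<eta> Q A B - (A\<^sup>2 - A * B + B\<^sup>2)"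
    and Q_scale: "\<And>A B. Q (\<pi> * A) (\<pi> * B) = \<pi>\<^sup>2 * u * Q A B"
    and u_unit: "v \<in> Z\<eta>" "v * u = 1"
    and "A \<in> Z\<eta>" "B \<in> Z\<eta>" and "\<pi> ^ (2 * j) dvd\<^sub>\<eta> Q A B"
  shows "\<pi> ^ j dvd\<^sub>\<eta> A \<and> \<pi> ^ j dvd\<^sub>\<eta> B"
  using assms(5-)
proof (induction j arbitrary: A B)
  case 0
  then show ?case
    by (simp add: int_adjoin.one_dvd_in)
next
  case (Suc j)
  have "\<pi> dvd\<^sub>\<eta> Q A B"
    using int_adjoin.dvd_in_trans[OF int_adjoin.dvd_in_power_le[OF pi_in, of 1 "2 * Suc j"] Suc.prems(3)]
    by simp
  from int_adjoin.dvd_in_diff[OF this Q_mod_pi[OF Suc.prems(1,2)]]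
  have "\<pi> dvd\<^sub>\<eta> A \<and> \<pi> dvd\<^sub>\<eta> B"
    by (intro pi_dvd_norm_form_imp Suc.prems(1,2)) (simp only: diff_diff_eq2 add_diff_cancel_left')
  then obtain A' B' where A': "A' \<in> Z\<eta>" "A = \<pi> * A'" and B': "B' \<in> Z\<eta>" "B = \<pi> * B'"
    by (meson int_adjoin.dvd_inE)
  have "Q A B = \<pi>\<^sup>2 * (u * Q A' B')" and "\<pi> ^ (2 * Suc j) = \<pi>\<^sup>2 * \<pi> ^ (2 * j)"
    by (simp_all add: A'(2) B'(2) Q_scale mult.assoc power_add[symmetric])
  with Suc.prems(3) have "\<pi>\<^sup>2 * \<pi> ^ (2 * j) dvd\<^sub>\<eta> \<pi>\<^sup>2 * (u * Q A' B')"
    by metis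
  then have "\<pi> ^ (2 * j) dvd\<^sub>\<eta> u * Q A' B'"
    by (rule int_adjoin.dvd_in_mult_cancel[rotated]) (simp add: pi_nonzero)
  from int_adjoin.dvd_in_mult_left[OF this u_unit(1)]
  have "\<pi> ^ (2 * j) dvd\<^sub>\<eta> Q A' B'"
    by (simp add: u_unit(2) mult.assoc[symmetric])
  from Suc.IH[OF A'(1) B'(1) this]
  have "\<pi> * \<pi> ^ j dvd\<^sub>\<eta> \<pi> * A' \<and> \<pi> * \<pi> ^ j dvd\<^sub>\<eta> \<pi> * B'"
    using int_adjoin.dvd_in_mult_mono[OF int_adjoin.dvd_in_refl] by blast
  then show ?case
    by (simp add: A'(2) B'(2))
qed

lemma norm_form_eq_0:
  assumes "A \<in> Z\<eta>" "B \<in> Z\<eta>" and "A\<^sup>2 - A * B + B\<^sup>2 = 0"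
  shows "A = 0 \<and> B = 0"
proof -
  have "\<pi> ^ j dvd\<^sub>\<eta> A \<and> \<pi> ^ j dvd\<^sub>\<eta> B" for j
    using assms
    by (intro pi_power_dvd_form_imp[where Q = "\<lambda>A B. A\<^sup>2 - A * B + B\<^sup>2" and u = 1 and v = 1])
      (simp_all add: int_adjoin.dvd_in_0 int_adjoin.one_closed power2_eq_square algebra_simps)
  then show ?thesis
    using eq_0_if_pi_powers_dvd assms(1,2) by blast
qed

lemma omega_independent:
  assumes "A \<in> Z\<eta>" "B \<in> Z\<eta>" and "A + B * \<omega> = 0"
  shows "A = 0 \<and> B = 0"
proof -
  have "A = - (B * \<omega>)"
    using assms(3) by (simp add: eq_neg_iff_add_eq_0)
  then have "A\<^sup>2 - A * B + B\<^sup>2 = B\<^sup>2 * (\<omega>\<^sup>2 + \<omega> + 1)"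
    by (simp add: power2_eq_square algebra_simps)
  also have "\<dots> = 0"
    using omega_square by simp
  finally show ?thesis
    using norm_form_eq_0 assms(1,2) by blast
qed

lemma herm_form_in: "A \<in> Z\<eta> \<Longrightarrow> B \<in> Z\<eta> \<Longrightarrow> herm_form A B \<in> Z\<eta>"
  by (simp add: herm_form_def int_adjoin.add_closed int_adjoin.diff_closed
      int_adjoin.mult_closed cnj_in)

lemma pi_power_dvd_herm_form_imp:
  assumes "A \<in> Z\<eta>" "B \<in> Z\<eta>" and "\<pi> ^ (2 * j) dvd\<^sub>\<eta> herm_form A B"
  shows "\<pi> ^ j dvd\<^sub>\<eta> A \<and> \<pi> ^ j dvd\<^sub>\<eta> B"
proof (rule pi_power_dvd_form_imp[where Q = herm_form and u = "- cnj \<eta>" and v = "- \<eta>"])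
  fix A B assume "A \<in> Z\<eta>" "B \<in> Z\<eta>"
  then have "\<pi> dvd\<^sub>\<eta> A * (cnj A - A) + B * (cnj B - B) - A * (cnj B - B)"
    by (intro int_adjoin.dvd_in_add int_adjoin.dvd_in_diff int_adjoin.dvd_in_mult_left pi_dvd_cnj_diff)
  moreover have "herm_form A B - (A\<^sup>2 - A * B + B\<^sup>2) = A * (cnj A - A) + B * (cnj B - B) - A * (cnj B - B)"
    by (simp add: herm_form_def power2_eq_square algebra_simps)
  ultimately show "\<pi> dvd\<^sub>\<eta> herm_form A B - (A\<^sup>2 - A * B + B\<^sup>2)"
    by simp
next
  show "herm_form (\<pi> * A) (\<pi> * B) = \<pi>\<^sup>2 * - cnj \<eta> * herm_form A B" for A B
    by (simp add: herm_form_def cnj_pi power2_eq_square algebra_simps)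
qed (use assms in \<open>simp_all add: eta_mult_cnj int_adjoin.uminus_closed eta_in\<close>)

lemma herm_form_eq_four_power:
  assumes "A \<in> Z\<eta>" "B \<in> Z\<eta>" and "herm_form A B = 4 ^ k"
  obtains A' B' where "A' \<in> Z\<eta>" "B' \<in> Z\<eta>" "A = 2 ^ k * A'" "B = 2 ^ k * B'" "herm_form A' B' = 1"
proof -
  obtain c where c: "c \<in> Z\<eta>" "2 = \<pi> ^ M * c"
    using pi_pow_M_dvd_two by (rule int_adjoin.dvd_inE)
  have "herm_form A B = ((\<pi> ^ M * c) ^ 2) ^ k"
    using assms(3) by (simp add: c(2)[symmetric])
  also have "\<dots> = \<pi> ^ (2 * (k * M)) * c ^ (2 * k)"
    by (simp add: power_mult_distrib mult_ac flip: power_mult)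
  finally have "\<pi> ^ (2 * (k * M)) dvd\<^sub>\<eta> herm_form A B"
    by (rule int_adjoin.dvd_inI[rotated]) (simp add: c(1) int_adjoin.power_closed)
  from pi_power_dvd_herm_form_imp[OF assms(1,2) this]
  obtain A1 B1 where A1: "A1 \<in> Z\<eta>" "A = \<pi> ^ (k * M) * A1" and B1: "B1 \<in> Z\<eta>" "B = \<pi> ^ (k * M) * B1"
    by (meson int_adjoin.dvd_inE)
  obtain w where w: "w \<in> Z\<eta>" "\<pi> ^ M = 2 * w"
    using two_dvd_pi_pow_M by (rule int_adjoin.dvd_inE)
  have pi_kM: "\<pi> ^ (k * M) = 2 ^ k * w ^ k"
    by (simp add: mult.commute[of k] power_mult w(2) power_mult_distrib)
  define A' B' where "A' = w ^ k * A1" and "B' = w ^ k * B1"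
  have "A' \<in> Z\<eta>" "B' \<in> Z\<eta>"
    using A1 B1 w by (simp_all add: A'_def B'_def int_adjoin.mult_closed int_adjoin.power_closed)
  moreover have "A = 2 ^ k * A'" "B = 2 ^ k * B'"
    by (simp_all add: A1(2) B1(2) A'_def B'_def pi_kM mult.assoc)
  moreover have "herm_form A B = 4 ^ k * herm_form A' B'"
    by (simp add: calculation(3,4) herm_form_def algebra_simps flip: power_mult_distrib)
  then have "herm_form A' B' = 1"
    by (simp add: assms(3))
  ultimately show ?thesis
    using that by blast
qed

lemma coord_sum:
  "(\<And>i. i \<in> I \<Longrightarrow> f i \<in> Z\<eta>) \<Longrightarrow> j < M \<Longrightarrow> coord (sum f I) j = (\<Sum>i\<in>I. coord (f i) j)"
proof (induction I rule: infinite_finite_induct)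
  case (insert i I)
  then show ?case
    by (simp add: coord_add int_adjoin.sum_closed)
qed (use coord_of_int[of _ 0] in simp_all)

lemma coord_eta_pow: "d < M \<Longrightarrow> coord (\<eta> ^ d) 0 = (if d = 0 then 1 else 0)"
proof -
  assume "d < M"
  have "(\<Sum>i<M. of_int (if i = d then 1 else 0) * \<eta> ^ i) = (\<Sum>i<M. if i = d then \<eta> ^ i else 0)"
    by (rule sum.cong) auto
  also have "\<dots> = \<eta> ^ d"
    using \<open>d < M\<close> by simp
  finally have "\<eta> ^ d = (\<Sum>i<M. of_int (if i = d then 1 else 0) * \<eta> ^ i)" ..
  from coord_eqI[OF this] show ?thesis
    using two_le_M by simp
qed

lemma coord_eta_pow_mult_cnj:
  assumes "j < M" "l < M"
  shows "coord (\<eta> ^ j * cnj \<eta> ^ l) 0 = (if j = l then 1 else 0)"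
proof -
  have "cnj \<eta> ^ l = cnj \<eta> ^ l * (\<eta> ^ l * \<eta> ^ (2 * M - l))"
    using assms(2) eta_pow_double_M by (simp flip: power_add)
  also have "\<dots> = (cnj \<eta> * \<eta>) ^ l * \<eta> ^ (2 * M - l)"
    by (simp add: power_mult_distrib mult.assoc)
  also have "\<dots> = \<eta> ^ (2 * M - l)"
    using eta_mult_cnj by (simp add: mult.commute)
  finally have prod: "\<eta> ^ j * cnj \<eta> ^ l = \<eta> ^ (j + (2 * M - l))"
    by (simp only: power_add)
  show ?thesis
  proof (cases "l \<le> j")
    case True
    then have "j + (2 * M - l) = 2 * M + (j - l)"
      using assms by linarith
    then have "\<eta> ^ j * cnj \<eta> ^ l = \<eta> ^ (2 * M) * \<eta> ^ (j - l)"
      unfolding prod by (simp only: power_add)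
    then show ?thesis
      using coord_eta_pow[of "j - l"] assms True by (simp add: eta_pow_double_M)
  next
    case False
    then have "j + (2 * M - l) = M + (M + j - l)"
      using assms by linarith
    then have "\<eta> ^ j * cnj \<eta> ^ l = of_int (- 1) * \<eta> ^ (M + j - l)"
      unfolding prod by (simp add: power_add eta_pow_M)
    then show ?thesis
      using coord_of_int_mult[of "\<eta> ^ (M + j - l)" 0 "- 1"] coord_eta_pow[of "M + j - l"] assms False
      by (simp add: int_adjoin.power_closed eta_in)
  qed
qed

lemma coord_mult_cnj:
  assumes "A \<in> Z\<eta>" "B \<in> Z\<eta>"
  shows "coord (A * cnj B) 0 = (\<Sum>j<M. coord A j * coord B j)"
proof -
  have "A * cnj B = (\<Sum>j<M. \<Sum>l<M. of_int (coord A j * coord B l) * (\<eta> ^ j * cnj \<eta> ^ l))"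
    by (subst coord_expansion[OF assms(1)], subst coord_expansion[OF assms(2)])
      (simp add: cnj_sum sum_product mult_ac)
  then have "coord (A * cnj B) 0
      = (\<Sum>j<M. \<Sum>l<M. coord A j * coord B l * coord (\<eta> ^ j * cnj \<eta> ^ l) 0)"
    using two_le_M
    by (simp add: coord_sum coord_of_int_mult int_adjoin.sum_closed int_adjoin.mult_closed
        int_adjoin.of_int_closed int_adjoin.power_closed eta_in cnj_in del: of_int_mult)
  also have "\<dots> = (\<Sum>j<M. \<Sum>l<M. if l = j then coord A j * coord B j else 0)"
    by (intro sum.cong refl) (auto simp: coord_eta_pow_mult_cnj)
  finally show ?thesis
    by simp
qed

lemma eq_coord_monomial:
  assumes "x \<in> Z\<eta>" "i < M" and "\<And>j. j < M \<Longrightarrow> j \<noteq> i \<Longrightarrow> coord x j = 0"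
  shows "x = of_int (coord x i) * \<eta> ^ i"
proof -
  have "x = (\<Sum>j<M. if j = i then of_int (coord x i) * \<eta> ^ i else 0)"
    by (subst coord_expansion[OF assms(1)], rule sum.cong) (use assms(3) in auto)
  also have "\<dots> = of_int (coord x i) * \<eta> ^ i"
    using assms(2) by simp
  finally show ?thesis .
qed

lemma coord_herm_form:
  assumes "A \<in> Z\<eta>" "B \<in> Z\<eta>"
  shows "coord (herm_form A B) 0
    = (\<Sum>j<M. (coord A j)\<^sup>2 - coord A j * coord B j + (coord B j)\<^sup>2)"
proof -
  have "A * cnj A \<in> Z\<eta>" "B * cnj B \<in> Z\<eta>" "A * cnj B \<in> Z\<eta>"
    using assms by (simp_all add: int_adjoin.mult_closed cnj_in)
  then have "coord (herm_form A B) 0 = coord (A * cnj A) 0 + coord (B * cnj B) 0 - coord (A * cnj B) 0"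
    unfolding herm_form_def using two_le_M by (simp add: coord_add coord_diff int_adjoin.add_closed)
  then show ?thesis
    using assms by (simp add: coord_mult_cnj sum.distrib sum_subtractf power2_eq_square)
qed

lemma herm_form_eq_1:
  assumes "A \<in> Z\<eta>" "B \<in> Z\<eta>" and "herm_form A B = 1"
  obtains j a b where "A = of_int a * \<eta> ^ j" "B = of_int b * \<eta> ^ j" "a\<^sup>2 - a * b + b\<^sup>2 = 1"
proof -
  define a b where "a = coord A" and "b = coord B"
  define t where "t j = (a j)\<^sup>2 - a j * b j + (b j)\<^sup>2" for j
  have t_sos: "2 * t j = (a j)\<^sup>2 + (b j)\<^sup>2 + (a j - b j)\<^sup>2" for j
    by (simp add: t_def power2_eq_square algebra_simps)
  have sum_t: "sum t {..<M} = 1"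
    using coord_herm_form[OF assms(1,2)] assms(3) coord_of_int[of 0 1] two_le_M
    by (simp add: t_def a_def b_def)
  have t_nonneg: "t j \<ge> 0" for j
    using t_sos[of j] zero_le_power2[of "a j"] zero_le_power2[of "b j"] zero_le_power2[of "a j - b j"]
    by linarith
  obtain j0 where j0: "j0 \<in> {..<M}" "t j0 = 1" and rest: "\<And>j. j \<in> {..<M} \<Longrightarrow> j \<noteq> j0 \<Longrightarrow> t j = 0"
    using sum_nonneg_int_eq_1[OF finite_lessThan t_nonneg sum_t] by blast
  have "a j = 0 \<and> b j = 0" if "j < M" "j \<noteq> j0" for j
  proof -
    have "t j = 0"
      using rest that by simp
    then have "(a j)\<^sup>2 = 0" "(b j)\<^sup>2 = 0"
      using t_sos[of j] zero_le_power2[of "a j"] zero_le_power2[of "b j"]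
        zero_le_power2[of "a j - b j"] by linarith+
    then show ?thesis
      by simp
  qed
  then have "A = of_int (a j0) * \<eta> ^ j0" "B = of_int (b j0) * \<eta> ^ j0"
    using j0(1) assms(1,2) by (simp_all add: a_def b_def eq_coord_monomial)
  moreover have "(a j0)\<^sup>2 - a j0 * b j0 + (b j0)\<^sup>2 = 1"
    using j0(2) by (simp add: t_def)
  ultimately show ?thesis
    by (rule that)
qed

abbreviation Z\<eta>\<omega> :: "complex set" where
  "Z\<eta>\<omega> \<equiv> {A + B * \<omega> | A B. A \<in> Z\<eta> \<and> B \<in> Z\<eta>}"

lemma int_subring_Z\<eta>\<omega>: "int_subring Z\<eta>\<omega>"
  using int_adjoin.int_subring_axioms omega_square
  by (intro int_subring_adjoin_quadratic[where c = "-1" and d = "-1"])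
    (simp_all add: int_adjoin.uminus_closed int_adjoin.one_closed)

theorem mult_cnj_eq_four_power:
  assumes "x \<in> Z\<eta>\<omega>" and "x * cnj x = 4 ^ k"
  obtains j e where "x = 2 ^ k * \<eta> ^ j * \<omega> ^ e"
proof -
  obtain A B where AB: "A \<in> Z\<eta>" "B \<in> Z\<eta>" and x: "x = A + B * \<omega>"
    using assms(1) by blast
  have "(herm_form A B - 4 ^ k) + (B * cnj A - A * cnj B) * \<omega> = 0"
    using assms(2) mult_cnj_adjoin_omega[of A B] by (simp add: x)
  moreover have "herm_form A B - 4 ^ k \<in> Z\<eta>" "B * cnj A - A * cnj B \<in> Z\<eta>"
    using AB by (simp_all add: herm_form_in int_adjoin.diff_closed int_adjoin.mult_closed
        int_adjoin.power_closed int_adjoin.numeral_closed cnj_in)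
  ultimately have "herm_form A B = 4 ^ k"
    using omega_independent by fastforce
  then obtain A' B' where "A' \<in> Z\<eta>" "B' \<in> Z\<eta>" "A = 2 ^ k * A'" "B = 2 ^ k * B'" "herm_form A' B' = 1"
    using herm_form_eq_four_power AB by blast
  moreover obtain j a b where "A' = of_int a * \<eta> ^ j" "B' = of_int b * \<eta> ^ j" "a\<^sup>2 - a * b + b\<^sup>2 = 1"
    using herm_form_eq_1 calculation by blast
  ultimately have x_eq: "x = 2 ^ k * \<eta> ^ j * (of_int a + of_int b * \<omega>)"
    by (simp add: x algebra_simps)
  obtain e where "of_int a + of_int b * \<omega> = \<omega> ^ e \<or> of_int a + of_int b * \<omega> = - (\<omega> ^ e)"
    using eisenstein_unit[OF \<open>a\<^sup>2 - a * b + b\<^sup>2 = 1\<close>] by blast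
  then consider "x = 2 ^ k * \<eta> ^ j * \<omega> ^ e" | "x = 2 ^ k * \<eta> ^ (j + M) * \<omega> ^ e"
    unfolding x_eq by (auto simp: power_add eta_pow_M)
  then show ?thesis
    using that by metis
qed

lemma omega_pow_eq_1_if_in:
  assumes "c \<in> Z\<eta>" "c \<noteq> 0" and "c * \<omega> ^ e \<in> Z\<eta>"
  shows "\<omega> ^ e = 1"
proof -
  have "\<omega> ^ e = (\<omega> ^ 3) ^ (e div 3) * \<omega> ^ (e mod 3)"
    by (simp flip: power_mult power_add)
  then have "\<omega> ^ e = \<omega> ^ (e mod 3)"
    by (simp add: omega_cube)
  moreover have "e mod 3 = 0 \<or> e mod 3 = 1 \<or> e mod 3 = 2"
    by auto
  moreover have False if "\<omega> ^ e = \<omega>"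
  proof -
    have "- (c * \<omega> ^ e) + c * \<omega> = 0"
      using that by simp
    then show False
      using omega_independent[OF int_adjoin.uminus_closed[OF assms(3)] assms(1)] assms(2) by blast
  qed
  moreover have False if "\<omega> ^ e = \<omega>\<^sup>2"
  proof -
    have "(c * \<omega> ^ e + c) + c * \<omega> = c * (\<omega>\<^sup>2 + \<omega> + 1)"
      using that by (simp add: algebra_simps)
    also have "\<dots> = 0"
      using omega_square by simp
    finally show False
      using omega_independent[OF int_adjoin.add_closed[OF assms(3,1)] assms(1)] assms(2) by blast
  qed
  ultimately show ?thesis
    by fastforce
qed

lemma Z\<eta>_subset_Z\<eta>\<omega>: "Z\<eta> \<subseteq> Z\<eta>\<omega>"
proof
  fix x assume "x \<in> Z\<eta>"
  moreover have "x = x + 0 * \<omega>"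
    by simp
  ultimately show "x \<in> Z\<eta>\<omega>"
    using int_adjoin.zero_closed by blast
qed

lemma omega_in_Z\<eta>\<omega>: "\<omega> \<in> Z\<eta>\<omega>"
proof -
  have "\<omega> = 0 + 1 * \<omega>"
    by simp
  with int_adjoin.zero_closed int_adjoin.one_closed show ?thesis
    by blast
qed

lemma zeta_in_Z\<eta>\<omega>: "zeta (3 * 2 ^ s) \<in> Z\<eta>\<omega>"
proof -
  interpret Z\<eta>\<omega>: int_subring Z\<eta>\<omega>
    by (rule int_subring_Z\<eta>\<omega>)
  define n :: nat where "n = 3 * 2 ^ s"
  define z where "z = zeta n"
  have "z ^ 3 = \<eta>"
    using two_le_M by (simp add: z_def zeta_pow \<eta>_def n_def flip: double_M)
  have "z ^ 2 ^ s = \<omega>"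
    by (simp add: z_def zeta_pow \<omega>_def n_def)
  have "(4::nat) ^ s mod 3 = 1"
    by (induction s) (auto simp: mod_mult_right_eq[symmetric])
  then have "(3::nat) dvd 1 + 2 * 4 ^ s"
    by presburger
  then obtain a :: nat where a: "1 + 2 * 4 ^ s = 3 * a"
    by (elim dvdE) blast
  have "(2::nat) ^ s * 2 ^ s = 4 ^ s"
    by (simp flip: power_mult_distrib)
  then have "1 + n * 2 ^ s = 3 * a + 2 ^ s * 2 ^ s"
    using a by (simp add: n_def)
  moreover have "z ^ (1 + n * 2 ^ s) = z"
    using zeta_pow_n[of n] by (simp add: z_def n_def power_add power_mult)
  ultimately have "z = z ^ (3 * a + 2 ^ s * 2 ^ s)"
    by simp
  also have "\<dots> = \<eta> ^ a * \<omega> ^ 2 ^ s"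
    by (simp add: power_add power_mult \<open>z ^ 3 = \<eta>\<close> \<open>z ^ 2 ^ s = \<omega>\<close>)
  finally have "z = \<eta> ^ a * \<omega> ^ 2 ^ s" .
  moreover have "\<eta> ^ a * \<omega> ^ 2 ^ s \<in> Z\<eta>\<omega>"
    using Z\<eta>_subset_Z\<eta>\<omega> eta_in
    by (intro Z\<eta>\<omega>.mult_closed Z\<eta>\<omega>.power_closed omega_in_Z\<eta>\<omega>) blast
  ultimately show ?thesis
    by (simp add: z_def n_def)
qed

lemma unitary_dyadic_Z\<eta>\<omega>:
  assumes "y \<in> Z\<eta>\<omega>" and "y = 2 ^ k * u" and "u * cnj u = 1"
  obtains j e where "u = \<eta> ^ j * \<omega> ^ e"
proof -
  have "y * cnj y = 4 ^ k"
    using assms(3) by (simp add: assms(2) mult_ac flip: power_mult_distrib)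
  then obtain j e where "y = 2 ^ k * \<eta> ^ j * \<omega> ^ e"
    using mult_cnj_eq_four_power assms(1) by blast
  then have "u = \<eta> ^ j * \<omega> ^ e"
    using assms(2) by simp
  then show ?thesis
    by (rule that)
qed

lemma unitary_dyadic_Z\<eta>:
  assumes "y \<in> Z\<eta>" and "y = 2 ^ k * u" and "u * cnj u = 1"
  obtains j where "u = \<eta> ^ j"
proof -
  obtain j e where u: "u = \<eta> ^ j * \<omega> ^ e"
    using unitary_dyadic_Z\<eta>\<omega> assms Z\<eta>_subset_Z\<eta>\<omega> by blast
  have "(2 ^ k * \<eta> ^ j) * \<omega> ^ e \<in> Z\<eta>"
    using assms(1,2) u by (simp add: mult.assoc)
  then have "\<omega> ^ e = 1"
    by (intro omega_pow_eq_1_if_in)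
      (simp_all add: int_adjoin.mult_closed int_adjoin.power_closed int_adjoin.numeral_closed
        eta_in eta_nonzero)
  with u show ?thesis
    using that by simp
qed

lemma eta_omega_pow_root: "(\<eta> ^ j * \<omega> ^ e) ^ (3 * 2 ^ s) = 1"
proof -
  have "\<eta> ^ (3 * 2 ^ s) = (\<eta> ^ (2 * M)) ^ 3"
    unfolding double_M by (simp add: mult.commute flip: power_mult)
  moreover have "\<omega> ^ (3 * 2 ^ s) = (\<omega> ^ 3) ^ 2 ^ s"
    by (simp flip: power_mult)
  moreover have "(\<eta> ^ j * \<omega> ^ e) ^ (3 * 2 ^ s) = (\<eta> ^ (3 * 2 ^ s)) ^ j * (\<omega> ^ (3 * 2 ^ s)) ^ e"
    unfolding power_mult_distrib by (simp add: mult.commute[of _ "3 * 2 ^ s"] flip: power_mult)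
  ultimately show ?thesis
    by (simp add: eta_pow_double_M omega_cube)
qed

end

section \<open>Unitary units of \<open>R\<^sub>n\<close>\<close>

theorem unitary_Rn_root_of_unity:
  assumes n: "n = 2 ^ s \<or> n = 3 * 2 ^ s" and "n \<ge> 8"
    and "u \<in> Rn n" and "u * cnj u = 1"
  shows "u ^ n = 1"
proof -
  have "2 \<le> s"
    using n \<open>n \<ge> 8\<close> by (cases s; cases "s - 1") auto
  interpret two_power_cyclotomic s
    by unfold_locales fact
  obtain y k where y: "y \<in> int_adjoin (zeta n)" and "u = y / 2 ^ k"
    using \<open>u \<in> Rn n\<close> unfolding Rn_iff by blast
  then have u: "y = 2 ^ k * u"
    by simp
  from n show ?thesis
  proof
    assume "n = 2 ^ s"
    then have "y \<in> Z\<eta>"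
      using y by (simp add: eta_eq_zeta)
    then obtain j where "u = \<eta> ^ j"
      using unitary_dyadic_Z\<eta> u \<open>u * cnj u = 1\<close> by blast
    then have "u ^ n = (\<eta> ^ (2 * M)) ^ j"
      unfolding \<open>n = 2 ^ s\<close> double_M by (simp add: mult.commute flip: power_mult)
    then show ?thesis
      by (simp add: eta_pow_double_M)
  next
    assume "n = 3 * 2 ^ s"
    then have "y \<in> Z\<eta>\<omega>"
      using y int_adjoin_subset[OF int_subring_Z\<eta>\<omega> zeta_in_Z\<eta>\<omega>] by blast
    then obtain j e where "u = \<eta> ^ j * \<omega> ^ e"
      using unitary_dyadic_Z\<eta>\<omega> u \<open>u * cnj u = 1\<close> by blast
    then show ?thesis
      using eta_omega_pow_root \<open>n = 3 * 2 ^ s\<close> by simp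
  qed
qed

section \<open>Unitary groups\<close>

lemmas mat2_simps = vec_eq_iff forall_2 matrix_matrix_mult_def sum_2 ctrans_def mat_def

lemma ctrans_mult: "ctrans ((A :: complex^2^2) ** B) = ctrans B ** ctrans A"
  by (simp add: mat2_simps mult.commute)

lemma ctrans_ctrans: "ctrans (ctrans A) = A"
  by (simp add: mat2_simps)

lemma ctrans_mat: "ctrans (mat c) = mat (cnj c)"
  by (simp add: mat2_simps)

lemma det_ctrans: "det (ctrans A) = cnj (det A)"
  by (simp add: det_2 ctrans_def mult.commute)

lemma det_mat_2: "det (mat c :: complex^2^2) = c\<^sup>2"
  by (simp add: det_2 mat_def power2_eq_square)

lemma mat_mult_mat: "mat c ** mat d = (mat (c * d) :: complex^2^2)"
  by (simp add: mat2_simps)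

lemma mat_mult_commute: "mat c ** (A :: complex^2^2) = A ** mat c"
  by (simp add: mat2_simps mult.commute)

lemma unitary_ctrans_mult: "A ** ctrans A = mat 1 \<Longrightarrow> ctrans A ** (A :: complex^2^2) = mat 1"
  using matrix_left_right_inverse by blast

lemma unitary_det:
  assumes "A ** ctrans A = mat 1"
  shows "det A * cnj (det A) = 1"
proof -
  have "det (A ** ctrans A) = det (mat 1 :: complex^2^2)"
    using assms by simp
  then show ?thesis
    by (simp add: det_mul det_ctrans det_mat_2)
qed

lemma U2_set_mult:
  assumes "A \<in> U2_set n" "B \<in> U2_set n"
  shows "A ** B \<in> U2_set n"
proof -
  have "(A ** B) ** ctrans (A ** B) = A ** (B ** ctrans B) ** ctrans A"
    by (simp add: ctrans_mult matrix_mul_assoc)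
  also have "\<dots> = mat 1"
    using assms by (simp add: U2_set_def)
  finally show ?thesis
    using assms by (simp add: U2_set_def matrix_matrix_mult_def sum_2 Rn.add_closed Rn.mult_closed)
qed

lemma U2_set_one: "mat 1 \<in> U2_set n"
  unfolding U2_set_def
  by (simp add: ctrans_mat mat_mult_mat) (simp add: mat_def Rn.zero_closed Rn.one_closed)

lemma U2_set_ctrans:
  assumes "n > 0" "A \<in> U2_set n"
  shows "ctrans A \<in> U2_set n"
  using assms unitary_ctrans_mult by (simp add: U2_set_def ctrans_ctrans ctrans_def Rn_cnj)

lemma scalar_in_U2_set_iff: "mat c \<in> U2_set n \<longleftrightarrow> c \<in> Rn n \<and> c * cnj c = 1"
proof -
  have "(mat c ** ctrans (mat c) = (mat 1 :: complex^2^2)) \<longleftrightarrow> c * cnj c = 1"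
    unfolding ctrans_mat mat_mult_mat by (simp add: mat2_simps)
  moreover have "(\<forall>i j. (mat c :: complex^2^2) $ i $ j \<in> Rn n) \<longleftrightarrow> c \<in> Rn n"
    by (auto simp: mat_def Rn.zero_closed)
  ultimately show ?thesis
    by (simp add: U2_set_def)
qed

lemma group_U2:
  assumes "n > 0"
  shows "group (U2 n)"
proof (rule groupI)
  fix A assume "A \<in> carrier (U2 n)"
  then have "ctrans A \<in> carrier (U2 n)" "ctrans A ** A = mat 1"
    using U2_set_ctrans[OF assms] unitary_ctrans_mult by (auto simp: U2_def U2_set_def)
  then show "\<exists>B \<in> carrier (U2 n). B \<otimes>\<^bsub>U2 n\<^esub> A = \<one>\<^bsub>U2 n\<^esub>"
    by (auto simp: U2_def)
qed (simp_all add: U2_def U2_set_mult U2_set_one matrix_mul_assoc)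

lemma inv_U2:
  assumes "n > 0" "A \<in> U2_set n"
  shows "inv\<^bsub>U2 n\<^esub> A = ctrans A"
proof -
  interpret group "U2 n"
    using group_U2[OF assms(1)] .
  show ?thesis
    using assms U2_set_ctrans[OF assms] unitary_ctrans_mult
    by (intro inv_equality) (auto simp: U2_def U2_set_def)
qed

lemma scalars_normal:
  assumes "n > 0"
  shows "scalars n \<lhd> U2 n"
proof -
  interpret group "U2 n"
    using group_U2[OF assms] .
  have "subgroup (scalars n) (U2 n)"
  proof (rule subgroupI)
    show "scalars n \<subseteq> carrier (U2 n)"
      by (auto simp: scalars_def U2_def)
    show "scalars n \<noteq> {}"
      using U2_set_one by (auto simp: scalars_def)
    show "inv\<^bsub>U2 n\<^esub> A \<in> scalars n" if "A \<in> scalars n" for A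
      using that inv_U2[OF assms] U2_set_ctrans[OF assms] by (auto simp: scalars_def ctrans_mat)
    show "A \<otimes>\<^bsub>U2 n\<^esub> B \<in> scalars n" if "A \<in> scalars n" "B \<in> scalars n" for A B
      using that U2_set_mult by (auto simp: scalars_def U2_def mat_mult_mat)
  qed
  moreover have "A \<otimes>\<^bsub>U2 n\<^esub> S \<otimes>\<^bsub>U2 n\<^esub> inv\<^bsub>U2 n\<^esub> A \<in> scalars n"
    if A_in: "A \<in> carrier (U2 n)" and S_in: "S \<in> scalars n" for A S
  proof -
    obtain c where S: "S = mat c"
      using S_in by (auto simp: scalars_def)
    have A: "A \<in> U2_set n"
      using A_in by (simp add: U2_def)
    have "A \<otimes>\<^bsub>U2 n\<^esub> S \<otimes>\<^bsub>U2 n\<^esub> inv\<^bsub>U2 n\<^esub> A = mat c ** (A ** ctrans A)"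
      unfolding inv_U2[OF assms A] by (simp add: U2_def S mat_mult_commute matrix_mul_assoc)
    also have "\<dots> = S"
      using A by (simp add: U2_set_def S)
    finally show ?thesis
      using S_in by simp
  qed
  ultimately show ?thesis
    by (simp add: normal_inv_iff)
qed

lemma inverse_in_mu: "x \<in> carrier (mu n) \<Longrightarrow> inverse x \<in> carrier (mu n)"
  by (simp add: mu_def power_inverse)

lemma group_mu:
  assumes "n > 0"
  shows "group (mu n)"
proof (rule groupI)
  fix x assume x: "x \<in> carrier (mu n)"
  then have "x \<noteq> 0"
    using assms by (auto simp: mu_def zero_power)
  with inverse_in_mu[OF x] show "\<exists>y \<in> carrier (mu n). y \<otimes>\<^bsub>mu n\<^esub> x = \<one>\<^bsub>mu n\<^esub>"
    by (auto simp: mu_def)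
qed (simp_all add: mu_def power_mult_distrib mult.assoc)

lemma inv_mu:
  assumes "n > 0" "x \<in> carrier (mu n)"
  shows "inv\<^bsub>mu n\<^esub> x = inverse x"
proof -
  interpret group "mu n"
    using group_mu[OF assms(1)] .
  have "x \<noteq> 0"
    using assms by (auto simp: mu_def zero_power)
  then show ?thesis
    using assms(2) inverse_in_mu[OF assms(2)] by (intro inv_equality) (simp_all add: mu_def)
qed

lemma comm_group_mu: "n > 0 \<Longrightarrow> comm_group (mu n)"
  by (rule group.group_comm_groupI[OF group_mu]) (simp_all add: mu_def mult.commute)

lemma subgroup_mu_squares:
  assumes "n > 0"
  shows "subgroup (mu_squares n) (mu n)"
proof
  have "(z\<^sup>2) ^ n = (z ^ n)\<^sup>2" for z :: complex
    by (simp only: power_mult[symmetric] mult.commute)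
  then show "mu_squares n \<subseteq> carrier (mu n)"
    by (auto simp: mu_squares_def mu_def)
  show "\<one>\<^bsub>mu n\<^esub> \<in> mu_squares n"
    by (auto simp: mu_squares_def mu_def intro!: exI[of _ 1])
  show "x \<otimes>\<^bsub>mu n\<^esub> y \<in> mu_squares n" if xy: "x \<in> mu_squares n" "y \<in> mu_squares n" for x y
  proof -
    obtain a b where "x = a\<^sup>2" "a ^ n = 1" "y = b\<^sup>2" "b ^ n = 1"
      using xy unfolding mu_squares_def by blast
    then have "x \<otimes>\<^bsub>mu n\<^esub> y = (a * b)\<^sup>2" "(a * b) ^ n = 1"
      by (simp_all add: mu_def power_mult_distrib)
    then show ?thesis
      by (auto simp: mu_squares_def)
  qed
  show "inv\<^bsub>mu n\<^esub> x \<in> mu_squares n" if x: "x \<in> mu_squares n" for x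
  proof -
    obtain z where z: "x = z\<^sup>2" "z ^ n = 1"
      using x unfolding mu_squares_def by blast
    have "x \<in> carrier (mu n)"
      using \<open>mu_squares n \<subseteq> carrier (mu n)\<close> x by blast
    then have "inv\<^bsub>mu n\<^esub> x = (inverse z)\<^sup>2"
      by (simp add: inv_mu[OF assms] z(1) power_inverse)
    moreover have "inverse z ^ n = 1"
      using z(2) by (simp add: power_inverse)
    ultimately show ?thesis
      by (auto simp: mu_squares_def)
  qed
qed

lemma normal_mu_squares: "n > 0 \<Longrightarrow> mu_squares n \<lhd> mu n"
  using comm_group.subgroup_imp_normal[OF comm_group_mu subgroup_mu_squares] by blast

lemma zeta_pow_in_mu_squares_iff:
  assumes "n > 0" "even n"
  shows "zeta n ^ k \<in> mu_squares n \<longleftrightarrow> even k"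
proof
  assume "zeta n ^ k \<in> mu_squares n"
  then obtain y where "zeta n ^ k = y\<^sup>2" "y ^ n = 1"
    by (auto simp: mu_squares_def)
  moreover obtain m where "y = zeta n ^ m"
    using root_of_unity_eq_zeta_pow[OF assms(1) \<open>y ^ n = 1\<close>] by blast
  ultimately have "zeta n ^ k = zeta n ^ (2 * m)"
    by (simp add: power_mult mult.commute[of 2] flip: power_mult)
  then have "k mod n = (2 * m) mod n"
    using zeta_pow_eq_iff[OF assms(1)] by blast
  then have "k mod 2 = (2 * m) mod 2"
    using assms(2) by (metis mod_mod_cancel)
  then show "even k"
    by presburger
next
  assume "even k"
  then obtain m where "k = 2 * m" ..
  moreover have "(zeta n ^ m) ^ n = (zeta n ^ n) ^ m"
    by (simp only: power_mult[symmetric] mult.commute)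
  ultimately have "zeta n ^ k = (zeta n ^ m)\<^sup>2" "(zeta n ^ m) ^ n = 1"
    using zeta_pow_n[OF assms(1)] by (simp_all add: mult.commute flip: power_mult)
  then show "zeta n ^ k \<in> mu_squares n"
    by (auto simp: mu_squares_def)
qed

theorem mu_mod_squares_iso:
  assumes "n > 0" "even n"
  shows "(mu n Mod mu_squares n) \<cong> integer_mod_group 2"
proof -
  define parity :: "complex \<Rightarrow> int" where "parity z = (if z \<in> mu_squares n then 0 else 1)" for z
  have parity_zeta_pow: "parity (zeta n ^ k) = (if even k then 0 else 1)" for k
    by (simp add: parity_def zeta_pow_in_mu_squares_iff[OF assms])
  have root: "\<exists>k. x = zeta n ^ k" if "x \<in> carrier (mu n)" for x
    using root_of_unity_eq_zeta_pow[OF assms(1), of x] that by (auto simp: mu_def)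
  have "parity \<in> hom (mu n) (integer_mod_group 2)"
  proof (rule homI)
    show "parity x \<in> carrier (integer_mod_group 2)" for x
      by (simp add: carrier_integer_mod_group parity_def)
    fix x y assume "x \<in> carrier (mu n)" "y \<in> carrier (mu n)"
    then obtain a b where "x = zeta n ^ a" "y = zeta n ^ b"
      using root by blast
    then show "parity (x \<otimes>\<^bsub>mu n\<^esub> y) = parity x \<otimes>\<^bsub>integer_mod_group 2\<^esub> parity y"
      by (simp add: mu_def parity_zeta_pow flip: power_add)
  qed
  then have hom: "group_hom (mu n) (integer_mod_group 2) parity"
    by (simp add: group_hom_def group_hom_axioms_def group_mu[OF assms(1)])
  have "1 \<in> carrier (mu n)" "zeta n \<in> carrier (mu n)"
    using zeta_pow_n[OF assms(1)] by (simp_all add: mu_def)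
  moreover have "parity 1 = 0" "parity (zeta n) = 1"
    using parity_zeta_pow[of 0] parity_zeta_pow[of 1] by simp_all
  ultimately have "{0, 1} \<subseteq> parity ` carrier (mu n)"
    by (metis empty_subsetI image_eqI insert_subset)
  moreover have "parity ` carrier (mu n) \<subseteq> {0, 1}"
    by (auto simp: parity_def)
  moreover have "carrier (integer_mod_group 2) = {0, 1}"
    by (auto simp: carrier_integer_mod_group)
  ultimately have "parity ` carrier (mu n) = carrier (integer_mod_group 2)"
    by blast
  moreover have "kernel (mu n) (integer_mod_group 2) parity = mu_squares n"
    using subgroup.subset[OF subgroup_mu_squares[OF assms(1)]] by (auto simp: kernel_def parity_def)
  ultimately show ?thesis
    using group_hom.FactGroup_iso[OF hom] by simp
qed

locale unitary_units_are_roots =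
  fixes n :: nat
  assumes n_pos: "n > 0"
    and unitary_unit_root: "\<And>u. u \<in> Rn n \<Longrightarrow> u * cnj u = 1 \<Longrightarrow> u ^ n = 1"
begin

lemma det_hom: "det \<in> hom (U2 n) (mu n)"
proof (rule homI)
  fix A assume "A \<in> carrier (U2 n)"
  then have "A \<in> U2_set n"
    by (simp add: U2_def)
  then have "det A \<in> Rn n" and "det A * cnj (det A) = 1"
    by (simp_all add: U2_set_def unitary_det) (simp add: det_2 Rn.diff_closed Rn.mult_closed)
  then show "det A \<in> carrier (mu n)"
    by (simp add: mu_def unitary_unit_root)
qed (simp add: U2_def mu_def det_mul)

definition det_class :: "complex^2^2 \<Rightarrow> complex set" where
  "det_class = (\<lambda>z. mu_squares n #>\<^bsub>mu n\<^esub> z) \<circ> det"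

lemma det_class_hom: "det_class \<in> hom (U2 n) (mu n Mod mu_squares n)"
  unfolding det_class_def using det_hom normal.r_coset_hom_Mod[OF normal_mu_squares[OF n_pos]]
  by (rule hom_compose)

lemma det_class_scalar:
  assumes "S \<in> scalars n"
  shows "det_class S = mu_squares n"
proof -
  obtain c where S: "S = mat c" and "mat c \<in> U2_set n"
    using assms by (auto simp: scalars_def)
  then have "c ^ n = 1"
    by (simp add: scalar_in_U2_set_iff unitary_unit_root)
  then have "det S \<in> mu_squares n"
    by (auto simp: S det_mat_2 mu_squares_def)
  then show ?thesis
    unfolding det_class_def
    using group.coset_join2[OF group_mu[OF n_pos] _ subgroup_mu_squares[OF n_pos]]
      subgroup.subset[OF subgroup_mu_squares[OF n_pos]] by auto
qed

lemma induced_det_class_exists: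
  "\<exists>g. g \<in> hom (PU2 n) (mu n Mod mu_squares n)
     \<and> (\<forall>A \<in> U2_set n. g (scalars n #>\<^bsub>U2 n\<^esub> A) = det_class A)"
proof -
  interpret group_hom "U2 n" "mu n Mod mu_squares n" det_class
    using det_class_hom group_U2[OF n_pos] normal.factorgroup_is_group[OF normal_mu_squares[OF n_pos]]
    by (simp add: group_hom_def group_hom_axioms_def)
  have "scalars n \<subseteq> kernel (U2 n) (mu n Mod mu_squares n) det_class"
    using det_class_scalar by (auto simp: kernel_def scalars_def U2_def)
  then obtain g where "g \<in> hom (U2 n Mod scalars n) (mu n Mod mu_squares n)"
    and "\<And>A. A \<in> carrier (U2 n) \<Longrightarrow> g (scalars n #>\<^bsub>U2 n\<^esub> A) = det_class A"
    using FactGroup_universal_kernel[OF scalars_normal[OF n_pos]] by metis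
  then show ?thesis
    by (auto simp: PU2_def U2_def)
qed

definition PU2_det_class :: "(complex^2^2) set \<Rightarrow> complex set" where
  "PU2_det_class = (SOME g. g \<in> hom (PU2 n) (mu n Mod mu_squares n)
     \<and> (\<forall>A \<in> U2_set n. g (scalars n #>\<^bsub>U2 n\<^esub> A) = det_class A))"

lemma PU2_det_class_hom: "PU2_det_class \<in> hom (PU2 n) (mu n Mod mu_squares n)"
  and PU2_det_class_coset: "A \<in> U2_set n \<Longrightarrow> PU2_det_class (scalars n #>\<^bsub>U2 n\<^esub> A) = det_class A"
  using someI_ex[OF induced_det_class_exists] by (simp_all add: PU2_det_class_def)

lemma carrier_PU2: "carrier (PU2 n) = (\<lambda>A. scalars n #>\<^bsub>U2 n\<^esub> A) ` U2_set n"
  by (simp add: PU2_def carrier_FactGroup U2_def)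

lemma PU2_det_class_surj: "PU2_det_class ` carrier (PU2 n) = carrier (mu n Mod mu_squares n)"
proof
  show "PU2_det_class ` carrier (PU2 n) \<subseteq> carrier (mu n Mod mu_squares n)"
    using PU2_det_class_hom by (auto simp: hom_def)
  show "carrier (mu n Mod mu_squares n) \<subseteq> PU2_det_class ` carrier (PU2 n)"
  proof
    fix Y assume "Y \<in> carrier (mu n Mod mu_squares n)"
    then obtain z where z: "z ^ n = 1" and Y: "Y = mu_squares n #>\<^bsub>mu n\<^esub> z"
      by (auto simp: carrier_FactGroup mu_def)
    define D :: "complex^2^2" where "D = (\<chi> i j. if i = j then if i = 1 then z else 1 else 0)"
    have "D \<in> U2_set n"
      using root_of_unity_in_Rn[OF n_pos z] root_of_unity_mult_cnj[OF n_pos z]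
      by (simp add: U2_set_def D_def mat2_simps Rn.zero_closed Rn.one_closed)
    moreover have "det D = z"
      by (simp add: D_def det_2)
    ultimately have "PU2_det_class (scalars n #>\<^bsub>U2 n\<^esub> D) = Y"
      by (simp add: PU2_det_class_coset det_class_def Y)
    moreover have "scalars n #>\<^bsub>U2 n\<^esub> D \<in> carrier (PU2 n)"
      using \<open>D \<in> U2_set n\<close> by (simp add: carrier_PU2)
    ultimately show "Y \<in> PU2_det_class ` carrier (PU2 n)"
      by blast
  qed
qed

lemma coset_meets_SU2:
  assumes "A \<in> U2_set n" and "det A \<in> mu_squares n"
  obtains B where "B \<in> SU2_set n" "scalars n #>\<^bsub>U2 n\<^esub> A = scalars n #>\<^bsub>U2 n\<^esub> B"
proof -
  obtain z where z: "det A = z\<^sup>2" "z ^ n = 1"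
    using assms(2) by (auto simp: mu_squares_def)
  have "cnj z * z = 1"
    using root_of_unity_mult_cnj[OF n_pos z(2)] by (simp add: mult.commute)
  moreover have "cnj z \<in> Rn n"
    using z(2) by (intro root_of_unity_in_Rn n_pos) (simp flip: complex_cnj_power)
  ultimately have "mat (cnj z) \<in> scalars n"
    by (auto simp: scalars_def scalar_in_U2_set_iff)
  define B where "B = mat (cnj z) ** A"
  have "B \<in> U2_set n"
    using U2_set_mult \<open>mat (cnj z) \<in> scalars n\<close> assms(1) by (simp add: B_def scalars_def)
  moreover have "det B = (cnj z * z)\<^sup>2"
    by (simp add: B_def det_mul det_mat_2 z(1) power_mult_distrib)
  ultimately have "B \<in> SU2_set n"
    using \<open>cnj z * z = 1\<close> by (simp add: SU2_set_def)
  have "B \<in> scalars n #>\<^bsub>U2 n\<^esub> A"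
    using \<open>mat (cnj z) \<in> scalars n\<close> by (auto simp: r_coset_def U2_def B_def)
  from group.repr_independence[OF group_U2[OF n_pos] this _ normal_imp_subgroup[OF scalars_normal[OF n_pos]]]
  have "scalars n #>\<^bsub>U2 n\<^esub> A = scalars n #>\<^bsub>U2 n\<^esub> B"
    using assms(1) by (simp add: U2_def)
  with \<open>B \<in> SU2_set n\<close> show ?thesis
    by (rule that)
qed

lemma PU2_det_class_kernel: "kernel (PU2 n) (mu n Mod mu_squares n) PU2_det_class = PSU2 n"
proof (intro equalityI subsetI)
  fix X assume "X \<in> kernel (PU2 n) (mu n Mod mu_squares n) PU2_det_class"
  then obtain A where A: "A \<in> U2_set n" "X = scalars n #>\<^bsub>U2 n\<^esub> A"
    and "mu_squares n #>\<^bsub>mu n\<^esub> det A = mu_squares n"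
    by (auto simp: kernel_def carrier_PU2 PU2_det_class_coset det_class_def)
  moreover have "det A \<in> carrier (mu n)"
    using det_hom A(1) by (auto simp: hom_def U2_def)
  ultimately have "det A \<in> mu_squares n"
    using group.coset_join1[OF group_mu[OF n_pos] _ _ subgroup_mu_squares[OF n_pos]] by blast
  with A show "X \<in> PSU2 n"
    by (auto simp: PSU2_def elim: coset_meets_SU2)
next
  fix X assume "X \<in> PSU2 n"
  then obtain A where A: "A \<in> SU2_set n" and X: "X = scalars n #>\<^bsub>U2 n\<^esub> A"
    by (auto simp: PSU2_def)
  then have "A \<in> U2_set n" "det A = 1"
    by (simp_all add: SU2_set_def)
  moreover have "mu_squares n #>\<^bsub>mu n\<^esub> 1 = mu_squares n"
    using group.coset_mult_one[OF group_mu[OF n_pos] subgroup.subset[OF subgroup_mu_squares[OF n_pos]]]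
    by (simp add: mu_def)
  ultimately show "X \<in> kernel (PU2 n) (mu n Mod mu_squares n) PU2_det_class"
    by (auto simp: kernel_def carrier_PU2 X PU2_det_class_coset det_class_def)
qed

theorem PU2_mod_PSU2_iso: "PSU2 n \<lhd> PU2 n \<and> (PU2 n Mod PSU2 n) \<cong> (mu n Mod mu_squares n)"
proof -
  interpret group_hom "PU2 n" "mu n Mod mu_squares n" PU2_det_class
    using PU2_det_class_hom normal.factorgroup_is_group[OF normal_mu_squares[OF n_pos]]
      normal.factorgroup_is_group[OF scalars_normal[OF n_pos]]
    by (simp add: group_hom_def group_hom_axioms_def PU2_def)
  show ?thesis
    using normal_kernel FactGroup_iso[OF PU2_det_class_surj] by (simp add: PU2_det_class_kernel)
qed

end

theorem proposition3p22:
  fixes n s :: nat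
  assumes "n = 2 ^ s \<or> n = 3 * 2 ^ s"
    and "n \<ge> 8"
  shows "PSU2 n \<lhd> PU2 n
    \<and> (PU2 n Mod PSU2 n) \<cong> (mu n Mod mu_squares n)
    \<and> (mu n Mod mu_squares n) \<cong> integer_mod_group 2"
proof -
  interpret unitary_units_are_roots n
    using assms unitary_Rn_root_of_unity by unfold_locales auto
  have "even n"
    using assms by (cases s) auto
  then show ?thesis
    using PU2_mod_PSU2_iso mu_mod_squares_iso n_pos by blast
qed

end
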